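(* (i) Let $a,b,\mu,\nu\in\mathbb{C}$ with $\operatorname{Re}\mu>0$ and $\operatorname{Re}\nu>0$, and let $0<x<z$ be real. Then $$\int_x^z (y-x)^{\mu-1}(z-y)^{\nu-1}y^{a-b-\mu}\,dy=\frac{\Gamma(\mu)\Gamma(\nu)}{\Gamma(\mu+\nu)}(z-x)^{\mu+\nu-1}x^{a-b-\mu}\,F\Big(b-a+\mu,\,\mu,\,\mu+\nu,\,1-\frac{z}{x}\Big).$$ (ii) Let $x>1$ and let $a,b,c,\mu,\nu\in\mathbb{C}$ with $\operatorname{Re}\mu>0$, $\operatorname{Re}\nu>0$, $\operatorname{Re}a>0$, $\operatorname{Re}b>0$, $c\notin\{0,-1,-2,\dots\}$. Then $$\Gamma(a)\Gamma(b)\,x^{-a+\mu}F(a,b,c,x^{-1})=\frac{\Gamma(a+\nu)\Gamma(b+\mu)}{\Gamma(\nu+\mu)}\int_x^{+\infty}I(x,z)\,z^{-a-\nu}F\big(a+\nu,\,b+\mu,\,c,\,z^{-1}\big)\,dz,$$ where $I(x,z)=(z-x)^{\nu+\mu-1}F\big(b-a+\mu,\,\mu,\,\nu+\mu,\,1-\frac{z}{x}\big)$.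
   Context: $F(a,b,c,z)=\sum_{n\ge0}\frac{(a)_n(b)_n}{(c)_n n!}z^n$ for $|z|<1$, with $(a)_n=\Gamma(a+n)/\Gamma(a)$, is the Gauss hypergeometric function, extended by analytic continuation (principal branch) to $\mathbb{C}\setminus[1,\infty)$. Powers of positive reals are principal. *)

theory Defs
  imports "HOL-Analysis.Analysis"
begin

text \<open>Gauss hypergeometric series, valid for norm z < 1.\<close>
definition hyp_series :: "complex \<Rightarrow> complex \<Rightarrow> complex \<Rightarrow> complex \<Rightarrow> complex" where
  "hyp_series a b c z =
     (\<Sum>n. pochhammer a n * pochhammer b n / (pochhammer c n * fact n) * z ^ n)"

definition hyp_dom :: "complex set" where
  "hyp_dom = - (complex_of_real ` {1..})"

text \<open>Principal branch of the analytic continuation of the series to the cut plane: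
  the holomorphic function on hyp_dom agreeing with the series on the unit disc
  (unique by the identity theorem, since hyp_dom is connected).\<close>
definition hypF :: "complex \<Rightarrow> complex \<Rightarrow> complex \<Rightarrow> complex \<Rightarrow> complex" where
  "hypF a b c = (SOME g. g holomorphic_on hyp_dom \<and>
                    (\<forall>w. norm w < 1 \<longrightarrow> g w = hyp_series a b c w))"

end

theory Submission
  imports Defs "HOL-Complex_Analysis.Complex_Analysis" "HOL-Real_Asymp.Real_Asymp"
begin

text \<open>
  Part (i): the substitution \<open>y = x + t (z - x)\<close> turns the integral into Euler's integral
  \<open>\<integral>[0,1] t^(\<mu>-1) (1-t)^(\<nu>-1) (1 - t w)^(-A) dt = B(\<mu>, \<nu>) F(A, \<mu>, \<mu> + \<nu>, w)\<close> with
  \<open>A = b - a + \<mu>\<close> and \<open>w = 1 - z/x\<close>. Euler's formula holds on the unit disc by integrating the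
  binomial series of \<open>(1 - t w)^(-A)\<close> termwise against the complex Beta integral (itself obtained
  from the real one by analytic continuation in each parameter), and on the whole cut plane
  because both sides are holomorphic there. As \<open>hypF\<close> is defined by choice, the continuation
  must also be shown to exist: Euler's integral provides it for \<open>Re c > Re b > 0\<close>, and the
  contiguous relation \<open>F(a, b, c) = F(a, b, c + 1) + z F'(a, b, c + 1) / c\<close> lowers \<open>c\<close>.

  Part (ii): expand \<open>F(a + \<nu>, b + \<mu>, c, 1/z)\<close> in powers of \<open>1/z\<close>. By part (i) the \<open>n\<close>-th term
  of the right-hand side is a multiple of the integral of
  \<open>(y-x)^(\<mu>-1) (z-y)^(\<nu>-1) y^(a-b-\<mu>) z^(-a-\<nu>-n)\<close> over \<open>x < y < z\<close>. Integrating first in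
  \<open>z\<close> and then in \<open>y\<close>, each time by a Beta integral on a half-line, gives
  \<open>x^(-b-n) B(b + n, \<mu>) B(a + n, \<nu>)\<close>, and the Gamma function identities turn the sum of these
  into the series of \<open>\<Gamma>(a) \<Gamma>(b) x^(\<mu>-a) F(a, b, c, 1/x)\<close>. Fubini's theorem and termwise
  integration apply because the absolute double integrals are bounded by a constant times
  \<open>x^(-n)\<close> and \<open>x > 1\<close>.
\<close>

section \<open>The cut plane and the continuation\<close>

lemma hyp_dom_eq: "hyp_dom = {w. Im w \<noteq> 0 \<or> Re w < 1}"
proof -
  have "w \<in> complex_of_real ` {1..} \<longleftrightarrow> Im w = 0 \<and> Re w \<ge> 1" for w
    by (auto simp: image_iff complex_eq_iff intro!: bexI[of _ "Re w"])
  then show ?thesis unfolding hyp_dom_def by auto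
qed

lemma one_minus_in_nonpos_Reals_iff: "1 - w \<in> \<real>\<^sub>\<le>\<^sub>0 \<longleftrightarrow> w \<notin> hyp_dom"
  by (auto simp: hyp_dom_eq complex_nonpos_Reals_iff)

lemma of_real_mult_in_hyp_dom:
  assumes w: "w \<in> hyp_dom" and t: "0 \<le> t" "t \<le> 1"
  shows "complex_of_real t * w \<in> hyp_dom"
proof (cases "Im w = 0")
  case True
  with w have "Re w < 1" by (simp add: hyp_dom_eq)
  with t have "t * Re w < 1"
    by (smt (verit) mult_left_le_one_le mult_nonneg_nonpos)
  then show ?thesis by (simp add: hyp_dom_eq)
next
  case False
  then show ?thesis by (cases "t = 0") (simp_all add: hyp_dom_eq)
qed

lemma one_minus_of_real_mult_notin_nonpos_Reals:
  "w \<in> hyp_dom \<Longrightarrow> 0 \<le> t \<Longrightarrow> t \<le> 1 \<Longrightarrow> 1 - complex_of_real t * w \<notin> \<real>\<^sub>\<le>\<^sub>0"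
  by (simp add: one_minus_in_nonpos_Reals_iff of_real_mult_in_hyp_dom)

lemma open_hyp_dom: "open hyp_dom"
  unfolding hyp_dom_eq Collect_disj_eq
  by (intro open_Un open_Collect_neq open_Collect_less continuous_intros)

lemma starlike_hyp_dom: "starlike hyp_dom"
  unfolding starlike_def
proof (intro bexI[of _ 0] ballI subsetI)
  fix w v assume "w \<in> hyp_dom" "v \<in> closed_segment 0 w"
  then show "v \<in> hyp_dom"
    by (auto simp: closed_segment_def scaleR_conv_of_real intro: of_real_mult_in_hyp_dom)
qed (simp add: hyp_dom_eq)

lemma connected_hyp_dom: "connected hyp_dom"
  by (rule starlike_imp_connected[OF starlike_hyp_dom])

lemma ball_subset_hyp_dom: "ball 0 1 \<subseteq> hyp_dom"
proof
  fix w :: complex assume "w \<in> ball 0 1"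
  then have "Re w < 1" using abs_Re_le_cmod[of w] by simp
  then show "w \<in> hyp_dom" by (simp add: hyp_dom_eq)
qed

lemma hypF_eqI:
  assumes hol: "g holomorphic_on hyp_dom"
      and eq: "\<And>w. norm w < 1 \<Longrightarrow> g w = hyp_series a b c w"
      and w: "w \<in> hyp_dom"
  shows "hypF a b c w = g w"
proof -
  have "\<exists>g. g holomorphic_on hyp_dom \<and> (\<forall>w. norm w < 1 \<longrightarrow> g w = hyp_series a b c w)"
    using hol eq by blast
  then have h: "hypF a b c holomorphic_on hyp_dom \<and>
                 (\<forall>w. norm w < 1 \<longrightarrow> hypF a b c w = hyp_series a b c w)"
    unfolding hypF_def by (rule someI_ex)
  show ?thesis
    by (rule analytic_continuation_open[of "ball 0 1" hyp_dom "hypF a b c" g w])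
       (use h hol w eq ball_subset_hyp_dom open_hyp_dom connected_hyp_dom in \<open>auto simp: dist_norm\<close>)
qed

section \<open>Holomorphic parameter integrals over the unit interval\<close>

lemma absolutely_integrable_on_Ioo_by_majorant:
  fixes f :: "real \<Rightarrow> 'b::euclidean_space"
  assumes cont: "continuous_on {a<..<b} f"
      and h: "h integrable_on {a..b}"
      and bound: "\<And>t. t \<in> {a..b} \<Longrightarrow> norm (f t) \<le> h t"
  shows "f absolutely_integrable_on {a<..<b}" "f integrable_on {a..b}"
proof -
  show "f absolutely_integrable_on {a<..<b}"
  proof (rule measurable_bounded_by_integrable_imp_absolutely_integrable)
    show "f \<in> borel_measurable (lebesgue_on {a<..<b})"
      by (rule continuous_imp_measurable_on_sets_lebesgue[OF cont]) auto
    show "h integrable_on {a<..<b}" using h by (simp add: integrable_on_Icc_iff_Ioo)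
  qed (use bound in auto)
  then show "f integrable_on {a..b}"
    using set_lebesgue_integral_eq_integral(1) integrable_on_Icc_iff_Ioo by blast
qed

lemma norm_integral_minus_integral_margins_le:
  fixes f :: "real \<Rightarrow> 'b::euclidean_space"
  assumes f: "f integrable_on {0..1}" and h: "h integrable_on {0..1}"
      and bound: "\<And>t. t \<in> {0..1} \<Longrightarrow> norm (f t) \<le> h t"
      and \<delta>: "0 \<le> \<delta>" "\<delta> \<le> 1/2"
  shows "norm (integral {0..1} f - integral {\<delta>..1 - \<delta>} f)
         \<le> integral {0..\<delta>} h + integral {1 - \<delta>..1} h"
proof -
  have "integral {0..\<delta>} f + integral {\<delta>..1} f = integral {0..1} f"
    by (rule Henstock_Kurzweil_Integration.integral_combine) (use \<delta> f in auto)
  moreover have "integral {\<delta>..1 - \<delta>} f + integral {1 - \<delta>..1} f = integral {\<delta>..1} f"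
    by (rule Henstock_Kurzweil_Integration.integral_combine)
       (use \<delta> f in \<open>auto intro: integrable_subinterval_real\<close>)
  ultimately have split: "integral {0..1} f - integral {\<delta>..1 - \<delta>} f
                          = integral {0..\<delta>} f + integral {1 - \<delta>..1} f"
    by (simp add: algebra_simps)
  have "norm (integral {0..\<delta>} f) \<le> integral {0..\<delta>} h"
    by (rule integral_norm_bound_integral)
       (use \<delta> f h bound in \<open>auto intro: integrable_subinterval_real\<close>)
  moreover have "norm (integral {1 - \<delta>..1} f) \<le> integral {1 - \<delta>..1} h"
    by (rule integral_norm_bound_integral)
       (use \<delta> f h bound in \<open>auto intro: integrable_subinterval_real\<close>)
  ultimately show ?thesis unfolding split by (smt (verit) norm_triangle_ineq)
qed

lemma uniform_limit_integral_shrinking_margins: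
  fixes f :: "'a \<Rightarrow> real \<Rightarrow> 'b::euclidean_space"
  assumes h: "h integrable_on {0..1}"
      and f: "\<And>w. w \<in> K \<Longrightarrow> f w integrable_on {0..1}"
      and bound: "\<And>w t. w \<in> K \<Longrightarrow> t \<in> {0..1} \<Longrightarrow> norm (f w t) \<le> h t"
      and \<delta>: "\<delta> \<longlonglongrightarrow> 0" "\<And>n. 0 \<le> \<delta> n \<and> \<delta> n \<le> 1/2"
  shows "uniform_limit K (\<lambda>n w. integral {\<delta> n..1 - \<delta> n} (f w)) (\<lambda>w. integral {0..1} (f w))
           sequentially"
proof (rule uniform_limitI)
  fix \<epsilon> :: real assume "\<epsilon> > 0"
  define e where "e n = integral {0..\<delta> n} h + integral {1 - \<delta> n..1} h" for n
  have in01: "\<delta> n \<in> {0..1}" "1 - \<delta> n \<in> {0..1}" for n using \<delta>(2)[of n] by auto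
  have "(\<lambda>n. 1 - \<delta> n) \<longlonglongrightarrow> 1"
    using tendsto_diff[OF tendsto_const[of 1] \<delta>(1)] by simp
  then have "(\<lambda>n. integral {1 - \<delta> n..1} h) \<longlonglongrightarrow> integral {1..1} h"
    by (rule continuous_on_tendsto_compose[OF indefinite_integral_continuous_1'[OF h]])
       (use in01 in \<open>auto intro!: always_eventually\<close>)
  moreover have "(\<lambda>n. integral {0..\<delta> n} h) \<longlonglongrightarrow> integral {0..0} h"
    by (rule continuous_on_tendsto_compose[OF indefinite_integral_continuous_1[OF h] \<delta>(1)])
       (use in01 in \<open>auto intro!: always_eventually\<close>)
  ultimately have "e \<longlonglongrightarrow> 0"
    using tendsto_add by (force simp: e_def[abs_def])
  with \<open>\<epsilon> > 0\<close> have "eventually (\<lambda>n. e n < \<epsilon>) sequentially"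
    by (auto dest: order_tendstoD)
  then show "\<forall>\<^sub>F n in sequentially. \<forall>w\<in>K.
               dist (integral {\<delta> n..1 - \<delta> n} (f w)) (integral {0..1} (f w)) < \<epsilon>"
  proof eventually_elim
    case (elim n)
    show ?case
    proof
      fix w assume "w \<in> K"
      with norm_integral_minus_integral_margins_le[OF f h bound] \<delta>(2)[of n]
      have "norm (integral {0..1} (f w) - integral {\<delta> n..1 - \<delta> n} (f w)) \<le> e n"
        by (simp add: e_def)
      with elim show "dist (integral {\<delta> n..1 - \<delta> n} (f w)) (integral {0..1} (f w)) < \<epsilon>"
        by (simp add: dist_norm norm_minus_commute)
    qed
  qed
qed

lemma holomorphic_on_parametric_integral:
  fixes f f' :: "complex \<Rightarrow> real \<Rightarrow> complex"
  assumes S: "open S" and sub: "{a..b} \<subseteq> T"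
      and deriv: "\<And>w t. w \<in> S \<Longrightarrow> t \<in> T \<Longrightarrow> ((\<lambda>w. f w t) has_field_derivative f' w t) (at w)"
      and cont_deriv: "continuous_on (S \<times> T) (\<lambda>(w, t). f' w t)"
      and cont: "\<And>w. w \<in> S \<Longrightarrow> continuous_on T (f w)"
  shows "(\<lambda>w. integral {a..b} (f w)) holomorphic_on S"
proof -
  have on_ball: "(\<lambda>w. integral (cbox a b) (f w)) holomorphic_on ball w0 r"
    if r: "ball w0 r \<subseteq> S" for w0 r
  proof (rule leibniz_rule_holomorphic[where fx = f'])
    show "((\<lambda>w. f w t) has_field_derivative f' w t) (at w within ball w0 r)"
      if "w \<in> ball w0 r" "t \<in> cbox a b" for w t
      using that sub r by (intro has_field_derivative_at_within[OF deriv]) auto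
    show "f w integrable_on cbox a b" if "w \<in> ball w0 r" for w
      using that sub r by (auto intro!: integrable_continuous_interval continuous_on_subset[OF cont])
    show "continuous_on (ball w0 r \<times> cbox a b) (\<lambda>(w, t). f' w t)"
      by (rule continuous_on_subset[OF cont_deriv]) (use sub r in auto)
  qed auto
  have "(\<lambda>w. integral {a..b} (f w)) field_differentiable (at w0)" if "w0 \<in> S" for w0
  proof -
    obtain r where "r > 0" "ball w0 r \<subseteq> S" using S \<open>w0 \<in> S\<close> open_contains_ball by blast
    with on_ball show ?thesis by (intro holomorphic_on_imp_differentiable_at) auto
  qed
  then show ?thesis using S by (simp add: holomorphic_on_open field_differentiable_def)
qed

lemma holomorphic_on_parametric_integral_01:
  fixes f f' :: "complex \<Rightarrow> real \<Rightarrow> complex"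
  assumes S: "open S"
      and deriv: "\<And>w t. w \<in> S \<Longrightarrow> t \<in> {0<..<1} \<Longrightarrow>
                    ((\<lambda>w. f w t) has_field_derivative f' w t) (at w)"
      and cont_deriv: "continuous_on (S \<times> {0<..<1}) (\<lambda>(w, t). f' w t)"
      and cont: "\<And>w. w \<in> S \<Longrightarrow> continuous_on {0<..<1} (f w)"
      and dominated: "\<And>w0. w0 \<in> S \<Longrightarrow> \<exists>d>0. cball w0 d \<subseteq> S \<and>
                  (\<exists>h. h integrable_on {0..1} \<and> (\<forall>w\<in>cball w0 d. \<forall>t\<in>{0..1}. norm (f w t) \<le> h t))"
  shows "(\<lambda>w. integral {0..1} (f w)) holomorphic_on S"
    and "\<And>w. w \<in> S \<Longrightarrow> f w integrable_on {0..1}"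
proof -
  show integrable: "f w integrable_on {0..1}" if w: "w \<in> S" for w
  proof -
    obtain d h where d: "d > 0" and h: "h integrable_on {0..1}"
      and hb: "\<forall>v\<in>cball w d. \<forall>t\<in>{0..1}. norm (f v t) \<le> h t"
      using dominated[OF w] by blast
    show ?thesis
      by (rule absolutely_integrable_on_Ioo_by_majorant(2)[OF cont[OF w] h]) (use hb d in auto)
  qed
  define \<delta> :: "nat \<Rightarrow> real" where "\<delta> n = 1 / (real n + 3)" for n
  have \<delta>: "\<delta> \<longlonglongrightarrow> 0" "0 < \<delta> n" "\<delta> n < 1/2" for n
    unfolding \<delta>_def by real_asymp (simp_all add: field_simps)
  have "{\<delta> n..1 - \<delta> n} \<subseteq> {0<..<1}" for n using \<delta>(2,3)[of n] by auto
  then have truncated: "(\<lambda>w. integral {\<delta> n..1 - \<delta> n} (f w)) holomorphic_on S" for n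
    by (rule holomorphic_on_parametric_integral[OF S _ deriv cont_deriv cont])
  have "\<exists>d>0. cball w0 d \<subseteq> S \<and>
      uniform_limit (cball w0 d) (\<lambda>n w. integral {\<delta> n..1 - \<delta> n} (f w))
        (\<lambda>w. integral {0..1} (f w)) sequentially" if w0: "w0 \<in> S" for w0
  proof -
    obtain d h where "d > 0" "cball w0 d \<subseteq> S" "h integrable_on {0..1}"
      and "\<forall>w\<in>cball w0 d. \<forall>t\<in>{0..1}. norm (f w t) \<le> h t"
      using dominated[OF w0] by blast
    with integrable \<delta> show ?thesis
      by (intro exI[of _ d] conjI uniform_limit_integral_shrinking_margins) (auto simp: less_imp_le)
  qed
  then show "(\<lambda>w. integral {0..1} (f w)) holomorphic_on S"
    by (rule holomorphic_uniform_sequence[OF S truncated])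
qed

section \<open>The Beta integral for complex parameters\<close>

lemma Re_pos_notin_nonpos_Ints: "Re z > 0 \<Longrightarrow> z \<notin> \<int>\<^sub>\<le>\<^sub>0"
  by (auto elim!: nonpos_Ints_cases)

lemma Beta_nonzero: "Re p > 0 \<Longrightarrow> Re q > 0 \<Longrightarrow> Beta p q \<noteq> 0"
  using Re_pos_notin_nonpos_Ints[of p] Re_pos_notin_nonpos_Ints[of q] Re_pos_notin_nonpos_Ints[of "p + q"]
  by (simp add: Beta_def Gamma_eq_zero_iff)

definition beta_integrand :: "complex \<Rightarrow> complex \<Rightarrow> real \<Rightarrow> complex" where
  "beta_integrand p q t = of_real t powr (p - 1) * of_real (1 - t) powr (q - 1)"

lemma of_real_powr_eq_exp: "t > 0 \<Longrightarrow> complex_of_real t powr s = exp (s * of_real (ln t))"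
  by (simp add: powr_def Ln_of_real)

lemma beta_integrand_eq_exp:
  "t \<in> {0<..<1} \<Longrightarrow>
   beta_integrand p q t = exp ((p - 1) * of_real (ln t)) * exp ((q - 1) * of_real (ln (1 - t)))"
  unfolding beta_integrand_def
  using of_real_powr_eq_exp[of t "p - 1"] of_real_powr_eq_exp[of "1 - t" "q - 1"] by simp

lemma norm_beta_integrand:
  "t \<in> {0..1} \<Longrightarrow> norm (beta_integrand p q t) = t powr (Re p - 1) * (1 - t) powr (Re q - 1)"
  by (simp add: beta_integrand_def norm_mult norm_powr_real_powr)

lemma continuous_on_beta_integrand: "continuous_on {0<..<1} (beta_integrand p q)"
proof -
  have "continuous_on {0<..<1}
          (\<lambda>t. exp ((p - 1) * of_real (ln t)) * exp ((q - 1) * of_real (ln (1 - t))))"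
    by (intro continuous_intros) auto
  then show ?thesis
    by (rule continuous_on_cong[THEN iffD1, rotated 2]) (auto simp: beta_integrand_eq_exp)
qed

lemma beta_integrand_swap: "beta_integrand p q (1 - t) = beta_integrand q p t"
  by (simp add: beta_integrand_def mult.commute)

lemma beta_integrand_mult_power:
  assumes "t \<ge> 0"
  shows "beta_integrand p q t * of_real t ^ n = beta_integrand (p + of_nat n) q t"
proof (cases "t = 0")
  case True
  then show ?thesis by (cases n) (auto simp: beta_integrand_def)
next
  case False
  have "complex_of_real t powr (p + of_nat n - 1) = of_real t powr ((p - 1) + of_nat n)"
    by (simp add: algebra_simps)
  also have "\<dots> = of_real t powr (p - 1) * of_real t powr of_nat n"
    by (rule powr_add)
  also have "complex_of_real t powr of_nat n = of_real t ^ n"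
    using False assms by (intro powr_complexpow) simp
  finally show ?thesis by (simp add: beta_integrand_def mult_ac)
qed

lemma absolutely_integrable_beta_integrand:
  assumes "Re p > 0" "Re q > 0"
  shows "beta_integrand p q absolutely_integrable_on {0<..<1}"
    and "beta_integrand p q integrable_on {0..1}"
  by (rule absolutely_integrable_on_Ioo_by_majorant[OF continuous_on_beta_integrand
        integrable_Beta'[of "Re p" "Re q"]]; use assms in \<open>simp add: norm_beta_integrand\<close>)+

lemma holomorphic_beta_integral:
  assumes q: "Re q > 0"
  shows "(\<lambda>p. integral {0..1} (beta_integrand p q)) holomorphic_on {p. Re p > 0}"
proof (rule holomorphic_on_parametric_integral_01
         [where f' = "\<lambda>p t. of_real (ln t) * beta_integrand p q t"])
  show "open {p::complex. Re p > 0}" by (intro open_Collect_less continuous_intros)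
  show "((\<lambda>p. beta_integrand p q t) has_field_derivative of_real (ln t) * beta_integrand p q t) (at p)"
    if "t \<in> {0<..<1}" for p t
    using that unfolding beta_integrand_eq_exp[OF that]
    by (auto intro!: derivative_eq_intros simp: beta_integrand_eq_exp algebra_simps)
  have "continuous_on ({p. Re p > 0} \<times> {0<..<1}) (\<lambda>x. of_real (ln (snd x)) *
          (exp ((fst x - 1) * of_real (ln (snd x))) * exp ((q - 1) * of_real (ln (1 - snd x)))))"
    by (intro continuous_intros) auto
  then show "continuous_on ({p. Re p > 0} \<times> {0<..<1}) (\<lambda>(p, t). of_real (ln t) * beta_integrand p q t)"
    by (rule continuous_on_cong[THEN iffD1, rotated 2]) (auto simp: beta_integrand_eq_exp)
  show "continuous_on {0<..<1} (beta_integrand p q)" for p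
    by (rule continuous_on_beta_integrand)
  show "\<exists>d>0. cball p0 d \<subseteq> {p. Re p > 0} \<and> (\<exists>h. h integrable_on {0..1} \<and>
          (\<forall>p\<in>cball p0 d. \<forall>t\<in>{0..1}. norm (beta_integrand p q t) \<le> h t))"
    if p0: "p0 \<in> {p. Re p > 0}" for p0
  proof -
    define d where "d = Re p0 / 2"
    have d: "d > 0" using p0 by (simp add: d_def)
    have Re_ge: "Re p \<ge> d" if "p \<in> cball p0 d" for p
      using that abs_Re_le_cmod[of "p0 - p"] by (simp add: dist_norm d_def)
    define h where "h t = t powr (d - 1) * (1 - t) powr (Re q - 1)" for t
    have "h integrable_on {0..1}" unfolding h_def using d q by (intro integrable_Beta') auto
    moreover have "norm (beta_integrand p q t) \<le> h t" if "p \<in> cball p0 d" "t \<in> {0..1}" for p t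
      unfolding norm_beta_integrand[OF that(2)] h_def
      using that Re_ge[OF that(1)] by (cases "t = 0") (auto intro!: mult_right_mono powr_mono')
    moreover have "cball p0 d \<subseteq> {p. Re p > 0}" using Re_ge d by force
    ultimately show ?thesis using d by blast
  qed
qed

lemma holomorphic_eq_on_Re_pos_if_eq_on_reals:
  assumes f: "f holomorphic_on {p. Re p > 0}" and g: "g holomorphic_on {p. Re p > 0}"
      and eq: "\<And>r. r > 0 \<Longrightarrow> f (complex_of_real r) = g (complex_of_real r)"
      and p: "Re p > 0"
  shows "f p = g p"
proof -
  have S: "open {p::complex. Re p > 0}" by (intro open_Collect_less continuous_intros)
  have lim: "1 islimpt (complex_of_real ` {0<..})"
  proof (rule islimpt_approachable[THEN iffD2], intro allI impI)
    fix e :: real assume "e > 0"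
    define r where "r = 1 + min (e/2) (1/2)"
    have "r > 0" "r \<noteq> 1" "dist r 1 < e" using \<open>e > 0\<close> by (auto simp: r_def dist_real_def min_def)
    then have "complex_of_real r \<in> complex_of_real ` {0<..}" "complex_of_real r \<noteq> 1"
      "dist (complex_of_real r) 1 < e"
      using dist_of_real[of r 1, where 'a = complex] by auto
    then show "\<exists>x'\<in>complex_of_real ` {0<..}. x' \<noteq> 1 \<and> dist x' 1 < e" by blast
  qed
  have "f p - g p = 0"
    by (rule analytic_continuation[of "\<lambda>z. f z - g z" "{p. Re p > 0}" "complex_of_real ` {0<..}" 1])
       (use f g S connected_halfspace_Re_gt lim eq p in \<open>auto intro!: holomorphic_intros\<close>)
  then show ?thesis by simp
qed

lemma has_integral_reflect_01_iff:
  fixes f :: "real \<Rightarrow> 'a::banach"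
  shows "((\<lambda>t. f (1 - t)) has_integral I) {0..1} \<longleftrightarrow> (f has_integral I) {0..1}"
proof -
  have reflect: "((\<lambda>t. g (1 - t)) has_integral J) {0..1}" if "(g has_integral J) {0..1}"
    for g :: "real \<Rightarrow> 'a" and J
  proof -
    have "((\<lambda>x. g ((-1) *\<^sub>R x + 1)) has_integral (1 / (\<bar>-1\<bar> ^ DIM(real))) *\<^sub>R J)
            ((\<lambda>x. (1 / (-1)) *\<^sub>R x + -((1 / (-1)) *\<^sub>R 1)) ` cbox 0 1)"
      by (rule has_integral_affinity) (use that in auto)
    moreover have "(\<lambda>x::real. (1 / (-1)) *\<^sub>R x + -((1 / (-1)) *\<^sub>R 1)) ` cbox 0 1 = {0..1}"
      by (auto simp: image_iff intro!: bexI[of _ "1 - x" for x])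
    ultimately show ?thesis by (simp add: algebra_simps)
  qed
  show ?thesis using reflect[of f] reflect[of "\<lambda>t. f (1 - t)"] by auto
qed

lemma integral_reflect_01:
  fixes f :: "real \<Rightarrow> 'a::banach"
  shows "integral {0..1} (\<lambda>t. f (1 - t)) = integral {0..1} f"
  by (simp add: integral_def integrable_on_def has_integral_reflect_01_iff)

lemma has_integral_beta_integrand_of_real:
  assumes "p > 0" "q > 0"
  shows "(beta_integrand (of_real p) (of_real q) has_integral Beta (of_real p) (of_real q)) {0..1}"
proof -
  have "((\<lambda>t. complex_of_real (t powr (p - 1) * (1 - t) powr (q - 1))) has_integral of_real (Beta p q)) {0..1}"
    by (rule has_integral_of_real[OF has_integral_Beta_real]) (use assms in auto)
  moreover have "complex_of_real (t powr (p - 1) * (1 - t) powr (q - 1))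
                 = beta_integrand (of_real p) (of_real q) t" if "t \<in> {0..1}" for t
  proof -
    have "complex_of_real (t powr (p - 1)) = of_real t powr (of_real p - 1)"
      "complex_of_real ((1 - t) powr (q - 1)) = of_real (1 - t) powr (of_real q - 1)"
      using powr_of_real[of t "p - 1"] powr_of_real[of "1 - t" "q - 1"] that by simp_all
    then show ?thesis unfolding of_real_mult beta_integrand_def by simp
  qed
  ultimately show ?thesis
    unfolding Beta_complex_of_real by (rule has_integral_eq[rotated])
qed

theorem has_integral_beta_integrand:
  assumes p: "Re p > 0" and q: "Re q > 0"
  shows "(beta_integrand p q has_integral Beta p q) {0..1}"
proof -
  have holo_Beta: "(\<lambda>p. Beta p s) holomorphic_on {p. Re p > 0}" if "Re s > 0" for s
    using that by (intro holomorphic_intros) (auto dest: Re_pos_notin_nonpos_Ints)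
  have real_right: "integral {0..1} (beta_integrand p (of_real r)) = Beta p (of_real r)"
    if "r > 0" "Re p > 0" for r p
    by (rule holomorphic_eq_on_Re_pos_if_eq_on_reals[OF holomorphic_beta_integral holo_Beta])
       (use that has_integral_beta_integrand_of_real in \<open>auto simp: integral_unique\<close>)
  have swap: "integral {0..1} (beta_integrand p s) = integral {0..1} (beta_integrand s p)" for s
    using integral_reflect_01[of "beta_integrand s p"] by (simp add: beta_integrand_swap)
  have "integral {0..1} (beta_integrand q p) = Beta q p"
  proof (rule holomorphic_eq_on_Re_pos_if_eq_on_reals[OF holomorphic_beta_integral[OF p] holo_Beta[OF p] _ q])
    show "integral {0..1} (beta_integrand (of_real r) p) = Beta (of_real r) p" if "r > 0" for r
      using real_right[OF that p] swap by (simp add: Beta_commute)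
  qed
  then have "integral {0..1} (beta_integrand p q) = Beta p q"
    by (simp add: swap Beta_commute)
  with absolutely_integrable_beta_integrand(2)[OF p q] show ?thesis
    by (metis has_integral_integrable_integral)
qed

section \<open>Hypergeometric coefficients\<close>

definition hyp_coeff :: "complex \<Rightarrow> complex \<Rightarrow> complex \<Rightarrow> nat \<Rightarrow> complex" where
  "hyp_coeff a b c n = pochhammer a n * pochhammer b n / (pochhammer c n * fact n)"

lemma hyp_series_eq_suminf: "hyp_series a b c z = (\<Sum>n. hyp_coeff a b c n * z ^ n)"
  by (simp add: hyp_series_def hyp_coeff_def)

lemma add_of_nat_notin_nonpos_Ints:
  fixes c :: "'a::ring_1"
  shows "c \<notin> \<int>\<^sub>\<le>\<^sub>0 \<Longrightarrow> c + of_nat n \<notin> \<int>\<^sub>\<le>\<^sub>0"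
  using nonpos_Ints_diff_Nats[of "c + of_nat n" "of_nat n"] by auto

lemma add_of_nat_nonzero_if_notin_nonpos_Ints:
  fixes c :: "'a::ring_1"
  shows "c \<notin> \<int>\<^sub>\<le>\<^sub>0 \<Longrightarrow> c + of_nat n \<noteq> 0"
  using add_of_nat_notin_nonpos_Ints[of c n] by auto

lemma hyp_coeff_Suc:
  assumes c: "c \<notin> \<int>\<^sub>\<le>\<^sub>0"
  shows "hyp_coeff a b c (Suc n)
         = hyp_coeff a b c n * ((a + of_nat n) * (b + of_nat n) / ((c + of_nat n) * (of_nat n + 1)))"
  using pochhammer_eq_0_imp_nonpos_Int[of c n] add_of_nat_nonzero_if_notin_nonpos_Ints[OF c, of n] c
  by (auto simp: hyp_coeff_def pochhammer_Suc field_simps)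

lemma summable_norm_hyp_series:
  assumes c: "c \<notin> \<int>\<^sub>\<le>\<^sub>0" and z: "norm z < 1"
  shows "summable (\<lambda>n. norm (hyp_coeff a b c n * z ^ n))"
proof -
  define \<rho> where "\<rho> n = (a + of_nat n) * (b + of_nat n) / ((c + of_nat n) * (of_nat n + 1))" for n
  define R where "R n = (norm a + real n) * (norm b + real n) / ((real n - norm c) * (real n + 1))" for n
  define q where "q = (1 + norm z) / 2"
  have q: "q < 1" "norm z < q" using z by (auto simp: q_def)
  have "R \<longlonglongrightarrow> 1" unfolding R_def by real_asymp
  then have "eventually (\<lambda>n. R n * norm z \<le> q) sequentially"
  proof (cases "z = 0")
    case False
    with q have "1 < q / norm z" by (simp add: field_simps)
    from order_tendstoD(2)[OF \<open>R \<longlonglongrightarrow> 1\<close> this]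
    show ?thesis by eventually_elim (use False in \<open>simp add: field_simps\<close>)
  qed (use q in simp)
  moreover have "eventually (\<lambda>n. real n > norm c) sequentially"
    by real_asymp
  ultimately have "eventually (\<lambda>n. R n * norm z \<le> q \<and> real n > norm c) sequentially"
    by (rule eventually_conj)
  then obtain N where N: "\<And>n. n \<ge> N \<Longrightarrow> R n * norm z \<le> q \<and> real n > norm c"
    by (auto simp: eventually_at_top_linorder)
  show ?thesis
  proof (rule summable_ratio_test[of q N])
    fix n assume n: "n \<ge> N"
    have "norm (a + of_nat n) \<le> norm a + real n" "norm (b + of_nat n) \<le> norm b + real n"
      using norm_triangle_ineq[of a "of_nat n"] norm_triangle_ineq[of b "of_nat n"] by simp_all
    moreover have "norm (c + of_nat n) \<ge> real n - norm c"
      using norm_triangle_ineq2[of "of_nat n" "-c"] by (simp add: algebra_simps)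
    moreover have "norm (of_nat n + 1 :: complex) = real n + 1"
      by (metis norm_of_nat of_nat_Suc add.commute)
    ultimately have "norm (\<rho> n) \<le> R n"
      unfolding \<rho>_def R_def norm_mult norm_divide using N[OF n]
      by (intro frac_le mult_mono) (auto intro!: mult_pos_pos)
    then have "norm (\<rho> n) * norm z \<le> q"
      using N[OF n] by (smt (verit) mult_right_mono norm_ge_zero)
    then have "norm (hyp_coeff a b c n * z ^ n) * (norm (\<rho> n) * norm z)
               \<le> norm (hyp_coeff a b c n * z ^ n) * q"
      by (rule mult_left_mono) simp
    then show "norm (norm (hyp_coeff a b c (Suc n) * z ^ Suc n)) \<le> q * norm (norm (hyp_coeff a b c n * z ^ n))"
      unfolding hyp_coeff_Suc[OF c] \<rho>_def[symmetric] by (simp add: norm_mult mult_ac)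
  qed (use q in auto)
qed

lemma hyp_series_sums:
  assumes "c \<notin> \<int>\<^sub>\<le>\<^sub>0" "norm z < 1"
  shows "(\<lambda>n. hyp_coeff a b c n * z ^ n) sums hyp_series a b c z"
  unfolding hyp_series_eq_suminf
  by (rule summable_sums[OF summable_norm_cancel[OF summable_norm_hyp_series[OF assms]]])

section \<open>Euler's integral representation\<close>

definition euler_integrand :: "complex \<Rightarrow> complex \<Rightarrow> complex \<Rightarrow> complex \<Rightarrow> real \<Rightarrow> complex" where
  "euler_integrand A B C w t = beta_integrand B (C - B) t * (1 - of_real t * w) powr (-A)"

lemma continuous_on_one_minus_powr:
  assumes "X \<subseteq> hyp_dom \<times> {0..1}"
  shows "continuous_on X (\<lambda>x. (1 - of_real (snd x) * fst x) powr s)"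
proof (intro continuous_intros)
  have slit: "1 - complex_of_real (snd x) * fst x \<notin> \<real>\<^sub>\<le>\<^sub>0" if "x \<in> X" for x
    using that assms one_minus_of_real_mult_notin_nonpos_Reals[of "fst x" "snd x"] by auto
  then show "X \<subseteq> {x. 0 \<le> Re (1 - complex_of_real (snd x) * fst x) \<or>
                      Im (1 - complex_of_real (snd x) * fst x) \<noteq> 0}"
    by (auto simp: complex_nonpos_Reals_iff)
  show "Re s > 0" if "x \<in> X" "1 - complex_of_real (snd x) * fst x = 0" for x
    using slit[OF that(1)] that(2) by simp
qed

lemma continuous_on_beta_integrand_snd:
  assumes "X \<subseteq> UNIV \<times> {0<..<1}"
  shows "continuous_on X (\<lambda>x. beta_integrand p q (snd x))"
  unfolding beta_integrand_def
proof (intro continuous_intros)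
  have "0 < snd x" "snd x < 1" if "x \<in> X" for x using assms that by auto
  then show "X \<subseteq> {x. 0 \<le> Re (complex_of_real (snd x)) \<or> Im (complex_of_real (snd x)) \<noteq> 0}"
    and "X \<subseteq> {x. 0 \<le> Re (complex_of_real (1 - snd x)) \<or> Im (complex_of_real (1 - snd x)) \<noteq> 0}"
    and "\<And>x. x \<in> X \<Longrightarrow> complex_of_real (snd x) = 0 \<Longrightarrow> 0 < Re (p - 1)"
    and "\<And>x. x \<in> X \<Longrightarrow> complex_of_real (1 - snd x) = 0 \<Longrightarrow> 0 < Re (q - 1)"
    by (fastforce simp: less_imp_le)+
qed

lemma euler_integrand_locally_dominated:
  assumes B: "Re B > 0" and CB: "Re (C - B) > 0" and w0: "w0 \<in> hyp_dom"
  shows "\<exists>d>0. cball w0 d \<subseteq> hyp_dom \<and> (\<exists>h. h integrable_on {0..1} \<and>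
           (\<forall>w\<in>cball w0 d. \<forall>t\<in>{0..1}. norm (euler_integrand A B C w t) \<le> h t))"
proof -
  obtain d where d: "d > 0" "cball w0 d \<subseteq> hyp_dom"
    using open_hyp_dom w0 open_contains_cball by blast
  have K: "compact (cball w0 d \<times> {0..1::real})" by (intro compact_Times) auto
  have "continuous_on (cball w0 d \<times> {0..1}) (\<lambda>x. (1 - of_real (snd x) * fst x) powr (-A))"
    by (rule continuous_on_one_minus_powr) (use d in auto)
  from compact_imp_bounded[OF compact_continuous_image[OF this K]]
  obtain M where M: "\<forall>v\<in>cball w0 d. \<forall>t\<in>{0..1}. norm ((1 - of_real t * v) powr (-A)) \<le> M"
    by (auto simp: bounded_pos)
  define h where "h t = M * (t powr (Re B - 1) * (1 - t) powr (Re (C - B) - 1))" for t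
  have "h integrable_on {0..1}" unfolding h_def
    by (intro integrable_on_mult_right integrable_Beta') (use B CB in auto)
  moreover have "norm (euler_integrand A B C w t) \<le> h t" if "w \<in> cball w0 d" "t \<in> {0..1}" for w t
  proof -
    have "norm (euler_integrand A B C w t)
          = (t powr (Re B - 1) * (1 - t) powr (Re (C - B) - 1)) * norm ((1 - of_real t * w) powr (-A))"
      using that by (simp add: euler_integrand_def norm_mult norm_beta_integrand)
    also have "\<dots> \<le> (t powr (Re B - 1) * (1 - t) powr (Re (C - B) - 1)) * M"
      using M that by (intro mult_left_mono) auto
    finally show ?thesis by (simp add: h_def mult_ac)
  qed
  ultimately show ?thesis using d by blast
qed

lemma holomorphic_euler_integral:
  assumes B: "Re B > 0" and CB: "Re (C - B) > 0"
  shows "(\<lambda>w. integral {0..1} (euler_integrand A B C w)) holomorphic_on hyp_dom"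
    and "w \<in> hyp_dom \<Longrightarrow> euler_integrand A B C w integrable_on {0..1}"
proof -
  define f' where "f' w t = beta_integrand B (C - B) t * (A * of_real t * (1 - of_real t * w) powr (-A-1))"
    for w t
  have "((\<lambda>w. euler_integrand A B C w t) has_field_derivative f' w t) (at w)"
    if w: "w \<in> hyp_dom" and t: "t \<in> {0<..<1}" for w t
  proof -
    have "1 - of_real t * w \<notin> \<real>\<^sub>\<le>\<^sub>0"
      using one_minus_of_real_mult_notin_nonpos_Reals[OF w] t by auto
    then have "((\<lambda>w. (1 - of_real t * w) powr (-A)) has_field_derivative
                 (-A) * (1 - of_real t * w) powr (-A - 1) * (- of_real t)) (at w)"
      by (auto intro!: derivative_eq_intros)
    from DERIV_cmult[OF this, of "beta_integrand B (C - B) t"] show ?thesis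
      by (simp add: euler_integrand_def[abs_def] f'_def algebra_simps)
  qed
  moreover have "continuous_on (hyp_dom \<times> {0<..<1}) (\<lambda>(w, t). f' w t)"
    unfolding f'_def case_prod_unfold
    by (intro continuous_intros continuous_on_beta_integrand_snd continuous_on_one_minus_powr) auto
  moreover have "continuous_on {0<..<1} (euler_integrand A B C w)" if w: "w \<in> hyp_dom" for w
  proof -
    have "continuous_on ((\<lambda>t. (w, t)) ` {0<..<1})
            (\<lambda>x. beta_integrand B (C - B) (snd x) * (1 - of_real (snd x) * fst x) powr (-A))"
      by (intro continuous_intros continuous_on_beta_integrand_snd continuous_on_one_minus_powr)
         (use w in auto)
    then have "continuous_on {0<..<1} ((\<lambda>x. beta_integrand B (C - B) (snd x) *
                 (1 - of_real (snd x) * fst x) powr (-A)) \<circ> (\<lambda>t. (w, t)))"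
      by (rule continuous_on_compose[rotated]) (intro continuous_intros)
    then show ?thesis by (simp add: o_def euler_integrand_def[abs_def])
  qed
  ultimately show "(\<lambda>w. integral {0..1} (euler_integrand A B C w)) holomorphic_on hyp_dom"
    and "w \<in> hyp_dom \<Longrightarrow> euler_integrand A B C w integrable_on {0..1}"
    using holomorphic_on_parametric_integral_01[OF open_hyp_dom, of "euler_integrand A B C" f']
      euler_integrand_locally_dominated[OF B CB]
    by blast+
qed

lemma Beta_add_of_nat_left:
  assumes B: "B \<notin> \<int>\<^sub>\<le>\<^sub>0" and BD: "B + D \<notin> \<int>\<^sub>\<le>\<^sub>0"
  shows "Beta (B + of_nat n) D = Beta B D * pochhammer B n / pochhammer (B + D) n"
proof -
  have "Gamma B \<noteq> 0" "Gamma (B + D) \<noteq> 0" "Gamma (B + D + of_nat n) \<noteq> 0"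
    using B BD add_of_nat_notin_nonpos_Ints[OF BD, of n] by (auto simp: Gamma_eq_zero_iff)
  then show ?thesis
    by (simp add: Beta_def pochhammer_Gamma[OF B] pochhammer_Gamma[OF BD] field_simps)
qed

lemma pochhammer_series_sums_powr:
  fixes A z :: complex
  assumes "norm z < 1"
  shows "(\<lambda>n. pochhammer A n / fact n * z ^ n) sums (1 - z) powr (-A)"
proof -
  have "(\<lambda>n. ((-A) gchoose n) * (-z) ^ n) sums (1 + (-z)) powr (-A)"
    by (rule gen_binomial_complex) (use assms in simp)
  moreover have "((-A) gchoose n) * (-z) ^ n = pochhammer A n / fact n * z ^ n" for n
  proof -
    have "((-A) gchoose n) * (-z) ^ n = ((-1) ^ n * (-1) ^ n) * pochhammer A n / fact n * z ^ n"
      by (simp add: gbinomial_pochhammer power_minus[of z] field_simps)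
    also have "(-1) ^ n * (-1) ^ n = (1::complex)" by (simp flip: power_add)
    finally show ?thesis by simp
  qed
  ultimately show ?thesis by simp
qed

lemma has_integral_beta_integrand_mult_polynomial:
  assumes "Re B > 0" "Re D > 0"
  shows "((\<lambda>t. beta_integrand B D t * (\<Sum>n<N. c n * (of_real t * w) ^ n)) has_integral
           (\<Sum>n<N. c n * w ^ n * Beta (B + of_nat n) D)) {0..1}"
proof -
  have "((\<lambda>t. \<Sum>n<N. c n * w ^ n * beta_integrand (B + of_nat n) D t) has_integral
          (\<Sum>n<N. c n * w ^ n * Beta (B + of_nat n) D)) {0..1}"
    using assms by (intro has_integral_sum has_integral_mult_right has_integral_beta_integrand) auto
  moreover have "(\<Sum>n<N. c n * w ^ n * beta_integrand (B + of_nat n) D t)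
                 = beta_integrand B D t * (\<Sum>n<N. c n * (of_real t * w) ^ n)"
    if "t \<in> {0..1}" for t
    unfolding sum_distrib_left using that
    by (intro sum.cong refl) (simp add: beta_integrand_mult_power[symmetric] power_mult_distrib mult_ac)
  ultimately show ?thesis by (rule has_integral_eq[rotated])
qed

lemma norm_partial_sum_le_suminf_norm:
  assumes t: "t \<in> {0..1}" and summable: "summable (\<lambda>n. norm (c n * w ^ n))"
  shows "norm (\<Sum>n<N. c n * (complex_of_real t * w) ^ n) \<le> (\<Sum>n. norm (c n * w ^ n))"
proof -
  have "norm (\<Sum>n<N. c n * (of_real t * w) ^ n) \<le> (\<Sum>n<N. norm (c n * w ^ n))"
  proof (rule order.trans[OF norm_sum sum_mono])
    fix n
    have "norm (c n * (of_real t * w) ^ n) = norm (c n * w ^ n) * t ^ n"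
      using t by (simp add: norm_mult norm_power power_mult_distrib)
    also have "\<dots> \<le> norm (c n * w ^ n)"
      using t by (intro mult_left_le power_le_one) auto
    finally show "norm (c n * (of_real t * w) ^ n) \<le> norm (c n * w ^ n)" .
  qed
  also have "\<dots> \<le> (\<Sum>n. norm (c n * w ^ n))" by (rule sum_le_suminf[OF summable]) auto
  finally show ?thesis .
qed

lemma sums_Beta_shifted_series:
  assumes B: "Re B > 0" and CB: "Re (C - B) > 0" and w: "norm w < 1"
  shows "(\<lambda>n. pochhammer A n / fact n * w ^ n * Beta (B + of_nat n) (C - B))
           sums (Beta B (C - B) * hyp_series A B C w)"
proof -
  have Bn: "B \<notin> \<int>\<^sub>\<le>\<^sub>0" and Cn: "C \<notin> \<int>\<^sub>\<le>\<^sub>0"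
    using B CB by (auto intro!: Re_pos_notin_nonpos_Ints)
  have eq: "pochhammer A n / fact n * w ^ n * Beta (B + of_nat n) (C - B)
            = Beta B (C - B) * (hyp_coeff A B C n * w ^ n)" for n
    using pochhammer_eq_0_imp_nonpos_Int[of C n] Cn
    by (auto simp: Beta_add_of_nat_left[OF Bn] hyp_coeff_def field_simps)
  show ?thesis
    unfolding eq by (rule sums_mult[OF hyp_series_sums[OF Cn w]])
qed

theorem has_integral_euler_integrand:
  assumes B: "Re B > 0" and CB: "Re (C - B) > 0" and w: "norm w < 1"
  shows "(euler_integrand A B C w has_integral Beta B (C - B) * hyp_series A B C w) {0..1}"
proof -
  have Bn: "B \<notin> \<int>\<^sub>\<le>\<^sub>0" using B by (rule Re_pos_notin_nonpos_Ints)
  define c where "c n = pochhammer A n / fact n" for n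
  define f where "f N t = beta_integrand B (C - B) t * (\<Sum>n<N. c n * (of_real t * w) ^ n)" for N t
  define S where "S = (\<Sum>n. norm (c n * w ^ n))"
  have "hyp_coeff A B B n = c n" for n
    using pochhammer_eq_0_imp_nonpos_Int[of B n] Bn by (auto simp: hyp_coeff_def c_def)
  then have summable: "summable (\<lambda>n. norm (c n * w ^ n))"
    using summable_norm_hyp_series[OF Bn w, of A B] by simp
  have "(f N has_integral (\<Sum>n<N. c n * w ^ n * Beta (B + of_nat n) (C - B))) {0..1}" for N
    unfolding f_def using B CB by (rule has_integral_beta_integrand_mult_polynomial)
  moreover have "(\<lambda>t. S * (t powr (Re B - 1) * (1 - t) powr (Re (C - B) - 1))) integrable_on {0..1}"
    by (intro integrable_on_mult_right integrable_Beta') (use B CB in auto)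
  moreover have "\<forall>t\<in>{0..1}. norm (f N t) \<le> S * (t powr (Re B - 1) * (1 - t) powr (Re (C - B) - 1))"
    for N
  proof
    fix t :: real assume t: "t \<in> {0..1}"
    have "norm (f N t) = (t powr (Re B - 1) * (1 - t) powr (Re (C - B) - 1))
                         * norm (\<Sum>n<N. c n * (of_real t * w) ^ n)"
      by (simp add: f_def norm_mult norm_beta_integrand[OF t])
    also have "\<dots> \<le> (t powr (Re B - 1) * (1 - t) powr (Re (C - B) - 1)) * S"
      by (rule mult_left_mono[OF norm_partial_sum_le_suminf_norm[OF t summable, folded S_def]]) simp
    finally show "norm (f N t) \<le> S * (t powr (Re B - 1) * (1 - t) powr (Re (C - B) - 1))"
      by (simp only: mult.commute)
  qed
  moreover have "\<forall>t\<in>{0..1}. (\<lambda>N. f N t) \<longlonglongrightarrow> euler_integrand A B C w t"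
  proof
    fix t :: real assume t: "t \<in> {0..1}"
    then have "norm (of_real t * w) \<le> norm w"
      by (simp add: norm_mult mult_left_le_one_le)
    then have "norm (of_real t * w) < 1" using w by simp
    from pochhammer_series_sums_powr[OF this, of A]
    show "(\<lambda>N. f N t) \<longlonglongrightarrow> euler_integrand A B C w t"
      unfolding f_def euler_integrand_def sums_def c_def by (intro tendsto_intros)
  qed
  moreover have "(\<lambda>N. \<Sum>n<N. c n * w ^ n * Beta (B + of_nat n) (C - B))
                   \<longlonglongrightarrow> Beta B (C - B) * hyp_series A B C w"
    using sums_Beta_shifted_series[OF B CB w, of A] by (simp add: sums_def c_def)
  ultimately show ?thesis
    by (rule has_integral_dominated_convergence)
qed

lemma euler_integral_continues_hyp_series:
  assumes B: "Re B > 0" and CB: "Re (C - B) > 0"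
  shows "(\<lambda>w. integral {0..1} (euler_integrand A B C w) / Beta B (C - B)) holomorphic_on hyp_dom"
    and "norm w < 1 \<Longrightarrow> integral {0..1} (euler_integrand A B C w) / Beta B (C - B) = hyp_series A B C w"
proof -
  have nz: "Beta B (C - B) \<noteq> 0" by (rule Beta_nonzero[OF B CB])
  then show "(\<lambda>w. integral {0..1} (euler_integrand A B C w) / Beta B (C - B)) holomorphic_on hyp_dom"
    by (intro holomorphic_intros holomorphic_euler_integral B CB)
  show "integral {0..1} (euler_integrand A B C w) / Beta B (C - B) = hyp_series A B C w"
    if "norm w < 1"
    using integral_unique[OF has_integral_euler_integrand[OF B CB that]] nz by simp
qed

lemma hypF_eq_euler_integral:
  assumes "Re B > 0" "Re (C - B) > 0" "w \<in> hyp_dom"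
  shows "hypF A B C w = integral {0..1} (euler_integrand A B C w) / Beta B (C - B)"
  using hypF_eqI[OF euler_integral_continues_hyp_series[OF assms(1,2)]] assms(3) by blast

section \<open>Existence of the continuation\<close>

lemma hyp_coeff_contiguous_c:
  assumes c: "c \<notin> \<int>\<^sub>\<le>\<^sub>0"
  shows "hyp_coeff a b c n = hyp_coeff a b (c + 1) n + of_nat n * hyp_coeff a b (c + 1) n / c"
proof -
  have c0: "c \<noteq> 0" and cn: "c + of_nat n \<noteq> 0"
    using c add_of_nat_nonzero_if_notin_nonpos_Ints[OF c] by auto
  have nz: "pochhammer c n \<noteq> 0" "pochhammer (c + 1) n \<noteq> 0"
    using c add_of_nat_notin_nonpos_Ints[OF c, of 1] pochhammer_eq_0_imp_nonpos_Int by fastforce+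
  have "pochhammer c n * (c + of_nat n) = c * pochhammer (c + 1) n"
    using pochhammer_Suc[of c n] pochhammer_rec[of c n] by simp
  then have pc: "pochhammer c n = c * pochhammer (c + 1) n / (c + of_nat n)"
    using cn by (simp add: field_simps)
  have "hyp_coeff a b c n = hyp_coeff a b (c + 1) n * ((c + of_nat n) / c)"
    unfolding hyp_coeff_def pc using nz c0 cn by (simp add: field_simps)
  also have "\<dots> = hyp_coeff a b (c + 1) n + of_nat n * hyp_coeff a b (c + 1) n / c"
    using c0 by (simp add: field_simps)
  finally show ?thesis .
qed

lemma hyp_series_contiguous_c:
  assumes c: "c \<notin> \<int>\<^sub>\<le>\<^sub>0"
      and g: "g holomorphic_on hyp_dom" "\<And>w. norm w < 1 \<Longrightarrow> g w = hyp_series a b (c + 1) w"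
  shows "(\<lambda>w. g w + w * deriv g w / c) holomorphic_on hyp_dom"
    and "norm w < 1 \<Longrightarrow> g w + w * deriv g w / c = hyp_series a b c w"
proof -
  have c1: "c + 1 \<notin> \<int>\<^sub>\<le>\<^sub>0" using add_of_nat_notin_nonpos_Ints[OF c, of 1] by simp
  show "(\<lambda>w. g w + w * deriv g w / c) holomorphic_on hyp_dom"
    using c g(1) open_hyp_dom by (intro holomorphic_intros) auto
  assume w: "norm w < 1"
  define h where "h = hyp_coeff a b (c + 1)"
  have sums: "(\<lambda>n. h n * z ^ n) sums g z" if "norm z < 1" for z
    using hyp_series_sums[OF c1 that] g(2)[OF that] by (simp add: h_def)
  have "w \<in> hyp_dom" using w ball_subset_hyp_dom by auto
  then have "(g has_field_derivative deriv g w) (at w)"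
    using holomorphic_derivI[OF g(1) open_hyp_dom] by blast
  from termdiffs_sums_strong[OF sums this w]
  have "(\<lambda>n. w * (diffs h n * w ^ n)) sums (w * deriv g w)"
    by (rule sums_mult)
  then have "(\<lambda>n. of_nat (Suc n) * h (Suc n) * w ^ Suc n) sums (w * deriv g w)"
    by (simp add: diffs_def mult_ac)
  then have "(\<lambda>n. of_nat n * h n * w ^ n) sums (w * deriv g w)"
    using sums_Suc_iff[of "\<lambda>n. of_nat n * h n * w ^ n"] by simp
  from sums_add[OF sums[OF w] sums_divide[OF this, of c]]
  have "(\<lambda>n. hyp_coeff a b c n * w ^ n) sums (g w + w * deriv g w / c)"
    using hyp_coeff_contiguous_c[OF c, of a b] by (simp add: h_def field_simps)
  then show "g w + w * deriv g w / c = hyp_series a b c w"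
    by (simp add: hyp_series_eq_suminf sums_iff)
qed

lemma hyp_continuation_exists:
  assumes b: "Re b > 0" and c: "c \<notin> \<int>\<^sub>\<le>\<^sub>0"
  shows "\<exists>g. g holomorphic_on hyp_dom \<and> (\<forall>w. norm w < 1 \<longrightarrow> g w = hyp_series a b c w)"
proof -
  have lower: "\<exists>g. g holomorphic_on hyp_dom \<and> (\<forall>w. norm w < 1 \<longrightarrow> g w = hyp_series a b c w)"
    if "c \<notin> \<int>\<^sub>\<le>\<^sub>0" "Re b < Re c + real k" for k c
    using that
  proof (induction k arbitrary: c)
    case 0
    then have "Re (c - b) > 0" by simp
    with euler_integral_continues_hyp_series[OF b this, where A = a] show ?case by blast
  next
    case (Suc k)
    then have "c + 1 \<notin> \<int>\<^sub>\<le>\<^sub>0" "Re b < Re (c + 1) + real k"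
      using add_of_nat_notin_nonpos_Ints[of c 1] by auto
    with Suc.IH obtain g where "g holomorphic_on hyp_dom"
      "\<And>w. norm w < 1 \<Longrightarrow> g w = hyp_series a b (c + 1) w"
      by blast
    with hyp_series_contiguous_c[OF Suc.prems(1)] show ?case by blast
  qed
  obtain k :: nat where "Re b - Re c < real k"
    using reals_Archimedean2 by blast
  then show ?thesis using lower[OF c, of k] by simp
qed

lemma hypF_eq_continuation:
  assumes "Re b > 0" "c \<notin> \<int>\<^sub>\<le>\<^sub>0"
  obtains g where "g holomorphic_on hyp_dom" "\<And>w. norm w < 1 \<Longrightarrow> g w = hyp_series a b c w"
    "\<And>w. w \<in> hyp_dom \<Longrightarrow> hypF a b c w = g w"
  using hyp_continuation_exists[OF assms, of a] hypF_eqI by metis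

lemma hypF_holomorphic: "Re b > 0 \<Longrightarrow> c \<notin> \<int>\<^sub>\<le>\<^sub>0 \<Longrightarrow> hypF a b c holomorphic_on hyp_dom"
  by (metis hypF_eq_continuation holomorphic_transform)

lemma hypF_eq_hyp_series:
  "Re b > 0 \<Longrightarrow> c \<notin> \<int>\<^sub>\<le>\<^sub>0 \<Longrightarrow> norm w < 1 \<Longrightarrow> hypF a b c w = hyp_series a b c w"
  by (metis hypF_eq_continuation ball_subset_hyp_dom mem_ball_0 subsetD)

section \<open>An Euler integral over an interval\<close>

definition interval_integrand ::
    "real \<Rightarrow> real \<Rightarrow> complex \<Rightarrow> complex \<Rightarrow> complex \<Rightarrow> complex \<Rightarrow> real \<Rightarrow> complex" where
  "interval_integrand x z \<mu> \<nu> a b y =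
     of_real (y - x) powr (\<mu> - 1) * of_real (z - y) powr (\<nu> - 1) * of_real y powr (a - b - \<mu>)"

lemma of_real_mult_powr:
  "0 \<le> p \<Longrightarrow> 0 \<le> q \<Longrightarrow> complex_of_real (p * q) powr s = of_real p powr s * of_real q powr s"
  by (simp add: powr_times_real)

lemma has_integral_interval_if_has_integral_01:
  fixes f :: "real \<Rightarrow> 'a::banach"
  assumes xz: "x < z" and f: "((\<lambda>t. f (x + t * (z - x))) has_integral I) {0..1}"
  shows "(f has_integral (z - x) *\<^sub>R I) {x..z}"
proof -
  define L where "L = z - x"
  define G where "G t = f (x + t * L)" for t
  have L: "L > 0" using xz by (simp add: L_def)
  from f have "(G has_integral I) (cbox 0 1)" by (simp add: G_def[abs_def] L_def)
  from has_integral_affinity'[OF this, of "1 / L" "- x / L"] L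
  have affine: "((\<lambda>y. G ((1 / L) *\<^sub>R y + - x / L)) has_integral I /\<^sub>R (1 / L))
          (cbox ((0 - - x / L) /\<^sub>R (1 / L)) ((1 - - x / L) /\<^sub>R (1 / L)))"
    by simp
  have box: "cbox ((0 - - x / L) /\<^sub>R (1 / L)) ((1 - - x / L) /\<^sub>R (1 / L)) = {x..z}"
    using L by (simp add: L_def field_simps)
  have G: "(\<lambda>y. G ((1 / L) *\<^sub>R y + - x / L)) = f"
    unfolding G_def using L by (auto simp: field_simps)
  from affine have "(f has_integral I /\<^sub>R (1 / L)) {x..z}"
    unfolding box G .
  then show ?thesis by (simp add: L_def)
qed

lemma interval_integrand_eq_euler_integrand:
  assumes x: "0 < x" and xz: "x < z" and t: "t \<in> {0<..<1}"
  shows "interval_integrand x z \<mu> \<nu> a b (x + t * (z - x))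
         = of_real (z - x) powr (\<mu> + \<nu> - 2) * of_real x powr (a - b - \<mu>)
           * euler_integrand (b - a + \<mu>) \<mu> (\<mu> + \<nu>) (1 - of_real (z / x)) t"
proof -
  define L where "L = z - x"
  have L: "L > 0" using xz by (simp add: L_def)
  have "complex_of_real (t * L) powr (\<mu> - 1) = of_real t powr (\<mu> - 1) * of_real L powr (\<mu> - 1)"
    "complex_of_real ((1 - t) * L) powr (\<nu> - 1) = of_real (1 - t) powr (\<nu> - 1) * of_real L powr (\<nu> - 1)"
    using of_real_mult_powr[of t L "\<mu> - 1"] of_real_mult_powr[of "1 - t" L "\<nu> - 1"] t L
    by simp_all
  moreover have "x + t * L - x = t * L" "z - (x + t * L) = (1 - t) * L"
    by (simp_all add: L_def algebra_simps)
  moreover have "complex_of_real (x + t * L) powr (a - b - \<mu>)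
                 = of_real x powr (a - b - \<mu>) * (1 - of_real t * (1 - of_real (z / x))) powr (a - b - \<mu>)"
  proof -
    have "1 - z / x < 0" using x xz by (simp add: field_simps)
    then have "1 - t * (1 - z / x) \<ge> 0"
      using t by (smt (verit) mult_nonneg_nonpos greaterThanLessThan_iff)
    moreover have "x + t * L = x * (1 - t * (1 - z / x))" using x by (simp add: L_def field_simps)
    ultimately have "complex_of_real (x + t * L) powr (a - b - \<mu>)
                     = of_real x powr (a - b - \<mu>) * of_real (1 - t * (1 - z / x)) powr (a - b - \<mu>)"
      using x by (simp add: of_real_mult_powr del: of_real_diff of_real_mult)
    also have "complex_of_real (1 - t * (1 - z / x)) = 1 - of_real t * (1 - of_real (z / x))"
      by simp
    finally show ?thesis .
  qed
  moreover have "complex_of_real L powr (\<mu> - 1) * of_real L powr (\<nu> - 1) = of_real L powr (\<mu> + \<nu> - 2)"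
    by (simp add: powr_add[symmetric] algebra_simps)
  ultimately show ?thesis
    unfolding interval_integrand_def euler_integrand_def beta_integrand_def L_def[symmetric]
    by (simp add: algebra_simps)
qed

theorem has_integral_interval_integrand:
  assumes mu: "Re \<mu> > 0" and nu: "Re \<nu> > 0" and x: "0 < x" and xz: "x < z"
  shows "(interval_integrand x z \<mu> \<nu> a b has_integral
           Gamma \<mu> * Gamma \<nu> / Gamma (\<mu> + \<nu>) * of_real (z - x) powr (\<mu> + \<nu> - 1)
           * of_real x powr (a - b - \<mu>) * hypF (b - a + \<mu>) \<mu> (\<mu> + \<nu>) (1 - of_real (z / x))) {x..z}"
proof -
  define w where "w = 1 - complex_of_real (z / x)"
  define F where "F = hypF (b - a + \<mu>) \<mu> (\<mu> + \<nu>) w"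
  define K where "K = complex_of_real (z - x) powr (\<mu> + \<nu> - 2) * of_real x powr (a - b - \<mu>)"
  have w: "w \<in> hyp_dom" using x xz by (simp add: hyp_dom_eq w_def)
  have CB: "Re (\<mu> + \<nu> - \<mu>) > 0" using nu by simp
  have "integral {0..1} (euler_integrand (b - a + \<mu>) \<mu> (\<mu> + \<nu>) w) = Beta \<mu> \<nu> * F"
    using hypF_eq_euler_integral[OF mu CB w] Beta_nonzero[OF mu nu] by (simp add: F_def)
  then have "(euler_integrand (b - a + \<mu>) \<mu> (\<mu> + \<nu>) w has_integral Beta \<mu> \<nu> * F) {0..1}"
    using holomorphic_euler_integral(2)[OF mu CB w] by (metis has_integral_integrable_integral)
  then have "((\<lambda>t. K * euler_integrand (b - a + \<mu>) \<mu> (\<mu> + \<nu>) w t) has_integral K * (Beta \<mu> \<nu> * F)) {0..1}"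
    by (rule has_integral_mult_right)
  then have "((\<lambda>t. interval_integrand x z \<mu> \<nu> a b (x + t * (z - x))) has_integral K * (Beta \<mu> \<nu> * F)) {0..1}"
    by (rule has_integral_spike_finite[of "{0, 1}", rotated 2])
       (use interval_integrand_eq_euler_integrand[OF x xz] in \<open>auto simp: K_def w_def\<close>)
  from has_integral_interval_if_has_integral_01[OF xz this]
  have "(interval_integrand x z \<mu> \<nu> a b has_integral (z - x) *\<^sub>R (K * (Beta \<mu> \<nu> * F))) {x..z}" .
  moreover have "(z - x) *\<^sub>R (K * (Beta \<mu> \<nu> * F))
      = Gamma \<mu> * Gamma \<nu> / Gamma (\<mu> + \<nu>) * of_real (z - x) powr (\<mu> + \<nu> - 1)
        * of_real x powr (a - b - \<mu>) * hypF (b - a + \<mu>) \<mu> (\<mu> + \<nu>) (1 - of_real (z / x))"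
  proof -
    have "complex_of_real (z - x) powr (\<mu> + \<nu> - 1) = of_real (z - x) powr ((\<mu> + \<nu> - 2) + 1)"
      by (simp add: algebra_simps)
    also have "\<dots> = of_real (z - x) powr (\<mu> + \<nu> - 2) * of_real (z - x)"
      unfolding powr_add using xz by simp
    finally have p: "complex_of_real (z - x) powr (\<mu> + \<nu> - 1)
                     = of_real (z - x) powr (\<mu> + \<nu> - 2) * of_real (z - x)" .
    show ?thesis
      unfolding K_def F_def w_def scaleR_conv_of_real p by (simp add: Beta_def field_simps)
  qed
  ultimately show ?thesis by simp
qed

section \<open>A Beta integral over a half-line\<close>

definition tail_integrand :: "real \<Rightarrow> complex \<Rightarrow> complex \<Rightarrow> real \<Rightarrow> complex" where
  "tail_integrand y p q z = of_real (z - y) powr (p - 1) * of_real z powr (-q - p)"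

lemma tail_integrand_measurable: "tail_integrand y p q \<in> borel_measurable borel"
  unfolding tail_integrand_def by measurable

lemma norm_tail_integrand:
  "z > y \<Longrightarrow> y \<ge> 0 \<Longrightarrow> norm (tail_integrand y p q z) = (z - y) powr (Re p - 1) * z powr (- Re q - Re p)"
  by (simp add: tail_integrand_def norm_mult norm_powr_real_powr)

lemma tail_integrand_substitution:
  assumes y: "y > 0" and s: "s \<in> {0<..<1}"
  shows "\<bar>- y / s\<^sup>2\<bar> *\<^sub>R tail_integrand y p q (y / s) = of_real y powr (-q) * beta_integrand q p s"
proof -
  have s0: "0 < s" "s < 1" using s by auto
  have "y / s - y = y * (1 - s) / s" using s0 by (simp add: field_simps)
  then have "ln (y / s - y) = ln y + ln (1 - s) - ln s" using s0 y by (simp add: ln_div ln_mult)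
  moreover have "y / s - y > 0" using s0 y by (simp add: field_simps)
  ultimately have 1: "complex_of_real (y / s - y) powr (p - 1)
                      = exp ((p - 1) * of_real (ln y + ln (1 - s) - ln s))"
    by (simp add: of_real_powr_eq_exp del: of_real_diff)
  have 2: "complex_of_real (y / s) powr (-q - p) = exp ((-q - p) * of_real (ln y - ln s))"
    using s0 y by (subst of_real_powr_eq_exp) (simp_all add: ln_div)
  have "ln (s\<^sup>2) = 2 * ln s" using s0 by (simp add: ln_realpow)
  then have "exp (2 * ln s) = s\<^sup>2" using s0 by (metis exp_ln zero_less_power)
  then have "\<bar>- y / s\<^sup>2\<bar> = exp (ln y - 2 * ln s)"
    using s0 y by (simp add: exp_diff)
  then have "\<bar>- y / s\<^sup>2\<bar> *\<^sub>R tail_integrand y p q (y / s)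
      = exp (of_real (ln y - 2 * ln s) + (p - 1) * of_real (ln y + ln (1 - s) - ln s)
             + (-q - p) * of_real (ln y - ln s))"
    unfolding tail_integrand_def scaleR_conv_of_real 1 2
    by (simp add: exp_add exp_of_real del: of_real_diff of_real_add)
  also have "\<dots> = exp (-q * of_real (ln y) + (q - 1) * of_real (ln s) + (p - 1) * of_real (ln (1 - s)))"
    by (rule arg_cong[where f = exp]) (simp add: algebra_simps)
  also have "\<dots> = of_real y powr (-q) * beta_integrand q p s"
    unfolding beta_integrand_eq_exp[OF s] of_real_powr_eq_exp[OF y] mult_exp_exp
    by (simp add: algebra_simps)
  finally show ?thesis .
qed

lemma divide_image_Ioo_01:
  fixes y :: real
  assumes "y > 0"
  shows "(\<lambda>s. y / s) ` {0<..<1} = {y<..}"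
proof
  show "(\<lambda>s. y / s) ` {0<..<1} \<subseteq> {y<..}" using assms by (auto simp: field_simps)
  show "{y<..} \<subseteq> (\<lambda>s. y / s) ` {0<..<1}"
  proof
    fix z assume "z \<in> {y<..}"
    then have "y / z \<in> {0<..<1}" "z = y / (y / z)" using assms by (auto simp: field_simps)
    then show "z \<in> (\<lambda>s. y / s) ` {0<..<1}" by blast
  qed
qed

theorem absolutely_integrable_tail_integrand:
  assumes y: "y > 0" and p: "Re p > 0" and q: "Re q > 0"
  shows "tail_integrand y p q absolutely_integrable_on {y<..}"
    and "integral {y<..} (tail_integrand y p q) = of_real y powr (-q) * Beta q p"
proof -
  define S where "S = {0<..<(1::real)}"
  have der: "((\<lambda>s. y / s) has_field_derivative - y / s\<^sup>2) (at s within S)" if "s \<in> S" for s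
    using that unfolding S_def by (auto intro!: derivative_eq_intros simp: power2_eq_square field_simps)
  have inj: "inj_on (\<lambda>s. y / s) S" unfolding S_def inj_on_def using y by (auto simp: field_simps)
  have eq: "\<bar>- y / s\<^sup>2\<bar> *\<^sub>R tail_integrand y p q (y / s) = of_real y powr (-q) * beta_integrand q p s"
    if "s \<in> S" for s
    using tail_integrand_substitution[OF y] that by (simp add: S_def)
  have "(\<lambda>s. \<bar>- y / s\<^sup>2\<bar> *\<^sub>R tail_integrand y p q (y / s)) absolutely_integrable_on S
        \<longleftrightarrow> (\<lambda>s. of_real y powr (-q) * beta_integrand q p s) absolutely_integrable_on S"
    by (intro set_integrable_cong refl eq)
  moreover have "(\<lambda>s. of_real y powr (-q) * beta_integrand q p s) absolutely_integrable_on S"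
    unfolding S_def by (rule set_integrable_mult_right[OF absolutely_integrable_beta_integrand(1)[OF q p]])
  moreover have "integral S (\<lambda>s. \<bar>- y / s\<^sup>2\<bar> *\<^sub>R tail_integrand y p q (y / s))
                 = integral S (\<lambda>s. of_real y powr (-q) * beta_integrand q p s)"
    by (intro Henstock_Kurzweil_Integration.integral_cong eq)
  moreover have "integral S (\<lambda>s. of_real y powr (-q) * beta_integrand q p s) = of_real y powr (-q) * Beta q p"
    using has_integral_beta_integrand[OF q p]
    by (simp add: S_def has_integral_Icc_iff_Ioo integral_unique)
  ultimately have substituted:
     "(\<lambda>s. \<bar>- y / s\<^sup>2\<bar> *\<^sub>R tail_integrand y p q (y / s)) absolutely_integrable_on S \<and>
      integral S (\<lambda>s. \<bar>- y / s\<^sup>2\<bar> *\<^sub>R tail_integrand y p q (y / s)) = of_real y powr (-q) * Beta q p"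
    by simp
  have "tail_integrand y p q absolutely_integrable_on (\<lambda>s. y / s) ` S \<and>
             integral ((\<lambda>s. y / s) ` S) (tail_integrand y p q) = of_real y powr (-q) * Beta q p"
    by (rule has_absolute_integral_change_of_variables_real[THEN iffD1, OF _ der inj substituted])
       (simp add: S_def)
  then show "tail_integrand y p q absolutely_integrable_on {y<..}"
    and "integral {y<..} (tail_integrand y p q) = of_real y powr (-q) * Beta q p"
    unfolding S_def divide_image_Ioo_01[OF y] by auto
qed

lemma set_integrable_lborel_if_absolutely_integrable:
  fixes f :: "'a::euclidean_space \<Rightarrow> 'b::euclidean_space"
  assumes ai: "f absolutely_integrable_on S" and S: "S \<in> sets borel"
      and meas: "f \<in> borel_measurable borel"
  shows "set_integrable lborel S f" "(LINT x:S|lborel. f x) = integral S f"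
proof -
  have m: "(\<lambda>x. indicator S x *\<^sub>R f x) \<in> borel_measurable lborel"
    using S meas by measurable
  have "integrable lebesgue (\<lambda>x. indicator S x *\<^sub>R f x)"
    using ai by (simp add: set_integrable_def)
  then show "set_integrable lborel S f"
    unfolding set_integrable_def using integrable_completion[OF m] by simp
  have "(LINT x:S|lebesgue. f x) = (LINT x:S|lborel. f x)"
    unfolding set_lebesgue_integral_def by (rule integral_completion[OF m])
  then show "(LINT x:S|lborel. f x) = integral S f"
    using set_lebesgue_integral_eq_integral(2)[OF ai] by simp
qed

lemma lborel_tail_integrand:
  assumes y: "y > 0" and p: "Re p > 0" and q: "Re q > 0"
  shows "set_integrable lborel {y<..} (tail_integrand y p q)"
    and "(LINT z:{y<..}|lborel. tail_integrand y p q z) = of_real y powr (-q) * Beta q p"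
  using set_integrable_lborel_if_absolutely_integrable
          [OF absolutely_integrable_tail_integrand(1)[OF y p q] _ tail_integrand_measurable]
    absolutely_integrable_tail_integrand(2)[OF y p q]
  by auto

lemma lborel_norm_tail_integrand:
  assumes y: "y > 0" and p: "Re p > 0" and q: "Re q > 0"
  shows "set_integrable lborel {y<..} (\<lambda>z. norm (tail_integrand y p q z))"
    and "(LINT z:{y<..}|lborel. norm (tail_integrand y p q z)) = y powr (- Re q) * Beta (Re q) (Re p)"
proof -
  show "set_integrable lborel {y<..} (\<lambda>z. norm (tail_integrand y p q z))"
    using lborel_tail_integrand(1)[OF y p q] by (rule set_integrable_norm)
  have "tail_integrand y (of_real (Re p)) (of_real (Re q)) z = of_real (norm (tail_integrand y p q z))"
    if "z \<in> {y<..}" for z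
  proof -
    have "norm (tail_integrand y p q z) = (z - y) powr (Re p - 1) * z powr (- Re q - Re p)"
      using that y by (intro norm_tail_integrand) auto
    then show ?thesis
      using that y powr_of_real[of "z - y" "Re p - 1"] powr_of_real[of z "- Re q - Re p"]
      by (simp add: tail_integrand_def)
  qed
  then have "(LINT z:{y<..}|lborel. tail_integrand y (of_real (Re p)) (of_real (Re q)) z)
             = (LINT z:{y<..}|lborel. complex_of_real (norm (tail_integrand y p q z)))"
    by (intro set_lebesgue_integral_cong) auto
  also have "\<dots> = of_real (LINT z:{y<..}|lborel. norm (tail_integrand y p q z))"
  proof -
    have e: "indicat_real {y<..} z *\<^sub>R complex_of_real (norm (tail_integrand y p q z))
             = complex_of_real (indicat_real {y<..} z * norm (tail_integrand y p q z))" for z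
      by (simp add: scaleR_conv_of_real)
    show ?thesis
      unfolding set_lebesgue_integral_def e integral_complex_of_real by simp
  qed
  finally have "complex_of_real (LINT z:{y<..}|lborel. norm (tail_integrand y p q z))
                = of_real y powr (- of_real (Re q)) * Beta (of_real (Re q)) (of_real (Re p))"
    using lborel_tail_integrand(2)[of y "of_real (Re p)" "of_real (Re q)"] y p q by simp
  also have "\<dots> = of_real (y powr (- Re q) * Beta (Re q) (Re p))"
    using y by (simp add: powr_of_real[symmetric] Beta_complex_of_real)
  finally show "(LINT z:{y<..}|lborel. norm (tail_integrand y p q z)) = y powr (- Re q) * Beta (Re q) (Re p)"
    by (simp only: of_real_eq_iff)
qed

section \<open>A double integral and termwise integration\<close>

definition double_integrand ::
    "real \<Rightarrow> complex \<Rightarrow> complex \<Rightarrow> complex \<Rightarrow> complex \<Rightarrow> real \<Rightarrow> real \<Rightarrow> complex" where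
  "double_integrand x \<mu> \<nu> a b y z =
     (if x < y \<and> y < z
      then of_real (y - x) powr (\<mu> - 1) * of_real y powr (a - b - \<mu>) * tail_integrand y \<nu> a z
      else 0)"

lemma double_integrand_measurable:
  "(\<lambda>p. double_integrand x \<mu> \<nu> a b (fst p) (snd p)) \<in> borel_measurable (lborel \<Otimes>\<^sub>M lborel)"
  unfolding measurable_cong_sets[OF sets_pair_measure_cong[OF sets_lborel sets_lborel] refl]
  unfolding double_integrand_def tail_integrand_def by measurable

lemma double_integrand_eq_0: "z \<le> x \<Longrightarrow> double_integrand x \<mu> \<nu> a b y z = 0"
  by (simp add: double_integrand_def)

lemma double_integrand_eq_interval_integrand:
  "double_integrand x \<mu> \<nu> a b y z
   = indicator {x<..<z} y *\<^sub>R (interval_integrand x z \<mu> \<nu> a b y * of_real z powr (- a - \<nu>))"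
  by (auto simp: double_integrand_def interval_integrand_def tail_integrand_def indicator_def mult_ac)

lemma double_integrand_add_of_nat:
  assumes "z > 0"
  shows "double_integrand x \<mu> \<nu> (a + of_nat n) (b + of_nat n) y z
         = double_integrand x \<mu> \<nu> a b y z * inverse (of_real z) ^ n"
proof -
  have "complex_of_real z powr (- (a + of_nat n) - \<nu>) = of_real z powr ((- a - \<nu>) + (- of_nat n))"
    by (simp add: algebra_simps)
  also have "\<dots> = of_real z powr (- a - \<nu>) * of_real z powr (- of_nat n)"
    by (rule powr_add)
  also have "complex_of_real z powr (- of_nat n) = inverse (of_real z) ^ n"
    using assms by (simp add: powr_minus power_inverse)
  finally show ?thesis
    by (simp add: double_integrand_def tail_integrand_def algebra_simps)
qed

lemma integral_double_integrand_add_of_nat: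
  assumes "x > 0"
  shows "(\<integral>y. double_integrand x \<mu> \<nu> (a + of_nat n) (b + of_nat n) y z \<partial>lborel)
         = inverse (of_real z) ^ n * (\<integral>y. double_integrand x \<mu> \<nu> a b y z \<partial>lborel)"
proof (cases "z > x")
  case True
  then show ?thesis using assms by (simp add: double_integrand_add_of_nat mult.commute)
next
  case False
  then show ?thesis by (simp add: double_integrand_eq_0)
qed

lemma double_integrand_eq_tail_integrand:
  "x < y \<Longrightarrow> double_integrand x \<mu> \<nu> a b y
     = (\<lambda>z. (of_real (y - x) powr (\<mu> - 1) * of_real y powr (a - b - \<mu>))
              * (indicator {y<..} z *\<^sub>R tail_integrand y \<nu> a z))"
  by (auto simp: double_integrand_def indicator_def fun_eq_iff)

lemma tail_integrand_eq_mult_powr: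
  "complex_of_real (y - x) powr (\<mu> - 1) * of_real y powr (a - b - \<mu>) * of_real y powr (-a)
   = tail_integrand x \<mu> b y"
proof -
  have "complex_of_real y powr (a - b - \<mu>) * of_real y powr (-a) = of_real y powr (-b - \<mu>)"
    by (simp flip: powr_add)
  then show ?thesis by (simp add: tail_integrand_def mult_ac)
qed

lemma integral_double_integrand_z:
  assumes x: "x > 0" and nu: "Re \<nu> > 0" and a: "Re a > 0"
  shows "integrable lborel (\<lambda>z. double_integrand x \<mu> \<nu> a b y z)"
    and "(\<integral>z. double_integrand x \<mu> \<nu> a b y z \<partial>lborel)
         = (if x < y then Beta a \<nu> * tail_integrand x \<mu> b y else 0)"
    and "(\<integral>z. norm (double_integrand x \<mu> \<nu> a b y z) \<partial>lborel)
         = (if x < y then Beta (Re a) (Re \<nu>) * norm (tail_integrand x \<mu> b y) else 0)"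
proof -
  define c where "c = complex_of_real (y - x) powr (\<mu> - 1) * of_real y powr (a - b - \<mu>)"
  have "integrable lborel (\<lambda>z. double_integrand x \<mu> \<nu> a b y z) \<and>
    (\<integral>z. double_integrand x \<mu> \<nu> a b y z \<partial>lborel)
      = (if x < y then Beta a \<nu> * tail_integrand x \<mu> b y else 0) \<and>
    (\<integral>z. norm (double_integrand x \<mu> \<nu> a b y z) \<partial>lborel)
      = (if x < y then Beta (Re a) (Re \<nu>) * norm (tail_integrand x \<mu> b y) else 0)"
  proof (cases "x < y")
    case False
    then have "double_integrand x \<mu> \<nu> a b y = (\<lambda>z. 0)" by (auto simp: double_integrand_def)
    then show ?thesis using False by simp
  next
    case True
    have y: "y > 0" using True x by simp
    have c: "c * of_real y powr (-a) = tail_integrand x \<mu> b y"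
      unfolding c_def by (rule tail_integrand_eq_mult_powr)
    have c_norm: "norm c * y powr (- Re a) = norm (tail_integrand x \<mu> b y)"
      using arg_cong[OF c, of norm] y by (simp add: norm_mult norm_powr_real_powr)
    have eq: "double_integrand x \<mu> \<nu> a b y = (\<lambda>z. c * (indicator {y<..} z *\<^sub>R tail_integrand y \<nu> a z))"
      unfolding c_def by (rule double_integrand_eq_tail_integrand[OF True])
    then have eq_norm: "(\<lambda>z. norm (double_integrand x \<mu> \<nu> a b y z))
        = (\<lambda>z. norm c * (indicator {y<..} z *\<^sub>R norm (tail_integrand y \<nu> a z)))"
      by (simp add: norm_mult mult_ac)
    show ?thesis
    proof (intro conjI)
      show "integrable lborel (\<lambda>z. double_integrand x \<mu> \<nu> a b y z)"
        using lborel_tail_integrand(1)[OF y nu a]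
        unfolding eq set_integrable_def by (intro integrable_mult_right)
      show "(\<integral>z. double_integrand x \<mu> \<nu> a b y z \<partial>lborel)
            = (if x < y then Beta a \<nu> * tail_integrand x \<mu> b y else 0)"
        using lborel_tail_integrand(2)[OF y nu a] True c
        unfolding eq integral_mult_right_zero set_lebesgue_integral_def by (simp add: mult_ac)
      show "(\<integral>z. norm (double_integrand x \<mu> \<nu> a b y z) \<partial>lborel)
            = (if x < y then Beta (Re a) (Re \<nu>) * norm (tail_integrand x \<mu> b y) else 0)"
        using lborel_norm_tail_integrand(2)[OF y nu a] True c_norm
        unfolding eq_norm integral_mult_right_zero set_lebesgue_integral_def by (simp add: mult_ac)
    qed
  qed
  then show "integrable lborel (\<lambda>z. double_integrand x \<mu> \<nu> a b y z)"
    and "(\<integral>z. double_integrand x \<mu> \<nu> a b y z \<partial>lborel)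
         = (if x < y then Beta a \<nu> * tail_integrand x \<mu> b y else 0)"
    and "(\<integral>z. norm (double_integrand x \<mu> \<nu> a b y z) \<partial>lborel)
         = (if x < y then Beta (Re a) (Re \<nu>) * norm (tail_integrand x \<mu> b y) else 0)"
    by blast+
qed

lemma integral_norm_inner_integral_le:
  fixes F :: "real \<Rightarrow> real \<Rightarrow> 'b::{banach, second_countable_topology}"
  assumes F: "integrable (lborel \<Otimes>\<^sub>M lborel) (\<lambda>p. F (fst p) (snd p))"
  shows "(\<integral>z. norm (\<integral>y. F y z \<partial>lborel) \<partial>lborel) \<le> (\<integral>y. (\<integral>z. norm (F y z) \<partial>lborel) \<partial>lborel)"
proof -
  have F': "integrable (lborel \<Otimes>\<^sub>M lborel) (case_prod F)"
    using F by (simp add: case_prod_unfold)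
  have F_norm: "integrable (lborel \<Otimes>\<^sub>M lborel) (\<lambda>p. norm (F (fst p) (snd p)))"
    using integrable_norm[OF F] .
  have "(\<integral>z. norm (\<integral>y. F y z \<partial>lborel) \<partial>lborel) \<le> (\<integral>z. (\<integral>y. norm (F y z) \<partial>lborel) \<partial>lborel)"
  proof (rule integral_mono)
    show "integrable lborel (\<lambda>z. norm (\<integral>y. F y z \<partial>lborel))"
      by (intro integrable_norm lborel_pair.integrable_snd[OF F'])
    show "integrable lborel (\<lambda>z. \<integral>y. norm (F y z) \<partial>lborel)"
      using lborel_pair.integrable_snd[of "\<lambda>y z. norm (F y z)"] F_norm
      by (simp add: case_prod_unfold)
  qed (rule integral_norm_bound)
  also have "\<dots> = (\<integral>y. (\<integral>z. norm (F y z) \<partial>lborel) \<partial>lborel)"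
    by (rule lborel_pair.Fubini_integral) (use F_norm in \<open>simp add: case_prod_unfold\<close>)
  finally show ?thesis .
qed

theorem integral_double_integrand_inner:
  assumes x: "x > 0" and mu: "Re \<mu> > 0" and nu: "Re \<nu> > 0" and a: "Re a > 0" and b: "Re b > 0"
  defines "D \<equiv> double_integrand x \<mu> \<nu> a b"
  shows "integrable (lborel \<Otimes>\<^sub>M lborel) (\<lambda>p. D (fst p) (snd p))"
    and "integrable lborel (\<lambda>z. \<integral>y. D y z \<partial>lborel)"
    and "(\<integral>z. (\<integral>y. D y z \<partial>lborel) \<partial>lborel) = of_real x powr (-b) * Beta b \<mu> * Beta a \<nu>"
    and "(\<integral>z. norm (\<integral>y. D y z \<partial>lborel) \<partial>lborel)
         \<le> x powr (- Re b) * Beta (Re b) (Re \<mu>) * Beta (Re a) (Re \<nu>)"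
proof -
  have inner: "(\<lambda>y. \<integral>z. D y z \<partial>lborel) = (\<lambda>y. Beta a \<nu> * (indicator {x<..} y *\<^sub>R tail_integrand x \<mu> b y))"
    using integral_double_integrand_z(2)[OF x nu a] by (auto simp: D_def indicator_def fun_eq_iff)
  have inner_norm: "(\<lambda>y. \<integral>z. norm (D y z) \<partial>lborel)
      = (\<lambda>y. Beta (Re a) (Re \<nu>) * (indicator {x<..} y *\<^sub>R norm (tail_integrand x \<mu> b y)))"
    using integral_double_integrand_z(3)[OF x nu a] by (auto simp: D_def indicator_def fun_eq_iff)
  show int: "integrable (lborel \<Otimes>\<^sub>M lborel) (\<lambda>p. D (fst p) (snd p))"
  proof (rule lborel_pair.Fubini_integrable)
    show "(\<lambda>p. D (fst p) (snd p)) \<in> borel_measurable (lborel \<Otimes>\<^sub>M lborel)"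
      unfolding D_def by (rule double_integrand_measurable)
    show "integrable lborel (\<lambda>y. \<integral>z. norm (D (fst (y, z)) (snd (y, z))) \<partial>lborel)"
      using lborel_norm_tail_integrand(1)[OF x mu b]
      unfolding fst_conv snd_conv inner_norm set_integrable_def by (intro integrable_mult_right)
    show "AE y in lborel. integrable lborel (\<lambda>z. D (fst (y, z)) (snd (y, z)))"
      using integral_double_integrand_z(1)[OF x nu a] by (simp add: D_def)
  qed
  then have int': "integrable (lborel \<Otimes>\<^sub>M lborel) (case_prod D)"
    by (simp add: case_prod_unfold)
  show "integrable lborel (\<lambda>z. \<integral>y. D y z \<partial>lborel)"
    by (rule lborel_pair.integrable_snd[OF int'])
  have "(\<integral>z. (\<integral>y. D y z \<partial>lborel) \<partial>lborel) = (\<integral>y. (\<integral>z. D y z \<partial>lborel) \<partial>lborel)"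
    by (rule lborel_pair.Fubini_integral[OF int'])
  also have "\<dots> = Beta a \<nu> * (of_real x powr (-b) * Beta b \<mu>)"
    unfolding inner integral_mult_right_zero
    using lborel_tail_integrand(2)[OF x mu b] by (simp add: set_lebesgue_integral_def)
  finally show "(\<integral>z. (\<integral>y. D y z \<partial>lborel) \<partial>lborel) = of_real x powr (-b) * Beta b \<mu> * Beta a \<nu>"
    by (simp add: mult_ac)
  have "(\<integral>z. norm (\<integral>y. D y z \<partial>lborel) \<partial>lborel) \<le> (\<integral>y. (\<integral>z. norm (D y z) \<partial>lborel) \<partial>lborel)"
    by (rule integral_norm_inner_integral_le[OF int])
  also have "\<dots> = x powr (- Re b) * Beta (Re b) (Re \<mu>) * Beta (Re a) (Re \<nu>)"
    unfolding inner_norm integral_mult_right_zero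
    using lborel_norm_tail_integrand(2)[OF x mu b] by (simp add: set_lebesgue_integral_def mult_ac)
  finally show "(\<integral>z. norm (\<integral>y. D y z \<partial>lborel) \<partial>lborel)
                \<le> x powr (- Re b) * Beta (Re b) (Re \<mu>) * Beta (Re a) (Re \<nu>)" .
qed

lemma integral_double_integrand_y:
  assumes x: "x > 0" and xz: "x < z" and mu: "Re \<mu> > 0" and nu: "Re \<nu> > 0"
      and int: "integrable lborel (\<lambda>y. double_integrand x \<mu> \<nu> a b y z)"
  shows "(\<integral>y. double_integrand x \<mu> \<nu> a b y z \<partial>lborel) = of_real z powr (- a - \<nu>) *
     (Gamma \<mu> * Gamma \<nu> / Gamma (\<mu> + \<nu>) * of_real (z - x) powr (\<mu> + \<nu> - 1)
      * of_real x powr (a - b - \<mu>) * hypF (b - a + \<mu>) \<mu> (\<mu> + \<nu>) (1 - of_real (z / x)))"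
proof -
  define K where "K = complex_of_real z powr (- a - \<nu>)"
  define J where "J = interval_integrand x z \<mu> \<nu> a b"
  have K: "K \<noteq> 0" using xz x by (simp add: K_def)
  have eq: "(\<lambda>y. double_integrand x \<mu> \<nu> a b y z) = (\<lambda>y. K * (indicator {x<..<z} y *\<^sub>R J y))"
    by (auto simp: double_integrand_eq_interval_integrand K_def J_def fun_eq_iff mult_ac)
  have "integrable lborel (\<lambda>y. inverse K * (K * (indicator {x<..<z} y *\<^sub>R J y)))"
    using int unfolding eq by (rule integrable_mult_right)
  then have J: "set_integrable lborel {x<..<z} J"
    using K by (simp add: set_integrable_def mult.assoc[symmetric])
  have "(\<integral>y. double_integrand x \<mu> \<nu> a b y z \<partial>lborel) = K * (LINT y:{x<..<z}|lborel. J y)"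
    unfolding eq integral_mult_right_zero set_lebesgue_integral_def ..
  also have "(LINT y:{x<..<z}|lborel. J y) = integral {x<..<z} J"
    by (rule set_borel_integral_eq_integral(2)[OF J])
  finally show ?thesis
    using has_integral_interval_integrand[OF mu nu x xz, of a b]
    by (simp add: K_def J_def has_integral_Icc_iff_Ioo integral_unique)
qed

lemma integral_norm_double_integrand_add_of_nat_le:
  assumes x: "x > 0" and mu: "Re \<mu> > 0" and nu: "Re \<nu> > 0" and a: "Re a > 0" and b: "Re b > 0"
  shows "(\<integral>z. norm (\<integral>y. double_integrand x \<mu> \<nu> (a + of_nat n) (b + of_nat n) y z \<partial>lborel) \<partial>lborel)
         \<le> inverse x ^ n * (x powr (- Re b) * Beta (Re b) (Re \<mu>) * Beta (Re a) (Re \<nu>))"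
proof -
  have "Re (a + of_nat n) > 0" "Re (b + of_nat n) > 0" using a b by auto
  from integral_double_integrand_inner(4)[OF x mu nu this]
  have "(\<integral>z. norm (\<integral>y. double_integrand x \<mu> \<nu> (a + of_nat n) (b + of_nat n) y z \<partial>lborel) \<partial>lborel)
        \<le> x powr (- Re b - n) * Beta (Re b + n) (Re \<mu>) * Beta (Re a + n) (Re \<nu>)"
    by simp
  also have "\<dots> \<le> inverse x ^ n * (x powr (- Re b) * Beta (Re b) (Re \<mu>) * Beta (Re a) (Re \<nu>))"
  proof -
    have "x powr (- Re b - n) = x powr (- Re b) * inverse x ^ n"
      using x by (simp add: powr_diff powr_realpow powr_minus divide_inverse power_inverse)
    moreover have "Beta (Re b + n) (Re \<mu>) \<le> Beta (Re b) (Re \<mu>)" "Beta (Re a + n) (Re \<nu>) \<le> Beta (Re a) (Re \<nu>)"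
      using a b mu nu by (intro Beta_real_mono; simp)+
    moreover have "Beta (Re b + n) (Re \<mu>) > 0" "Beta (Re a + n) (Re \<nu>) > 0"
      using a b mu nu by (simp_all add: Beta_def Gamma_real_pos add_pos_nonneg)
    ultimately show ?thesis
      using x by (simp add: mult_ac mult_mono mult_left_mono)
  qed
  finally show ?thesis .
qed

lemma sums_integral_double_integrand_series:
  assumes x: "x > 1" and mu: "Re \<mu> > 0" and nu: "Re \<nu> > 0" and a: "Re a > 0" and b: "Re b > 0"
      and c: "c \<notin> \<int>\<^sub>\<le>\<^sub>0"
  defines "f \<equiv> \<lambda>n z. hyp_coeff (a + \<nu>) (b + \<mu>) c n *
                    (\<integral>y. double_integrand x \<mu> \<nu> (a + of_nat n) (b + of_nat n) y z \<partial>lborel)"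
  shows "integrable lborel (\<lambda>z. \<Sum>n. f n z)"
    and "(\<lambda>n. hyp_coeff (a + \<nu>) (b + \<mu>) c n *
             (of_real x powr (-(b + of_nat n)) * Beta (b + of_nat n) \<mu> * Beta (a + of_nat n) \<nu>))
           sums (\<integral>z. (\<Sum>n. f n z) \<partial>lborel)"
proof -
  define h where "h = hyp_coeff (a + \<nu>) (b + \<mu>) c"
  define G where "G z = (\<integral>y. double_integrand x \<mu> \<nu> a b y z \<partial>lborel)" for z
  define C where "C = x powr (- Re b) * Beta (Re b) (Re \<mu>) * Beta (Re a) (Re \<nu>)"
  have x0: "x > 0" using x by simp
  have an: "Re (a + of_nat n) > 0" "Re (b + of_nat n) > 0" for n using a b by auto
  have f_eq: "f n z = h n * inverse (of_real z) ^ n * G z" for n z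
    using integral_double_integrand_add_of_nat[OF x0] by (simp add: f_def h_def G_def mult_ac)
  have f_int: "integrable lborel (f n)" for n
    unfolding f_def using integral_double_integrand_inner(2)[OF x0 mu nu an(1)[of n] an(2)[of n]]
    by (intro integrable_mult_right) simp
  have norm_f_le: "(\<integral>z. norm (f n z) \<partial>lborel) \<le> norm (h n) * (inverse x ^ n * C)" for n
    using integral_norm_double_integrand_add_of_nat_le[OF x0 mu nu a b, of n]
    by (simp add: f_def h_def C_def norm_mult mult_left_mono mult.commute)
  have majorant: "summable (\<lambda>n. norm (h n) * (inverse x ^ n * C))"
  proof -
    have "norm (inverse (complex_of_real x)) < 1" using x by (simp add: norm_inverse inverse_less_1_iff)
    from summable_mult2[OF summable_norm_hyp_series[OF c this, of "a + \<nu>" "b + \<mu>"], of C]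
    show ?thesis using x by (simp add: h_def norm_mult norm_power norm_inverse mult_ac)
  qed
  have summable_int: "summable (\<lambda>n. \<integral>z. norm (f n z) \<partial>lborel)"
    by (rule summable_comparison_test[OF _ majorant]) (use norm_f_le in \<open>auto intro!: exI[of _ 0]\<close>)
  have "AE z in lborel. summable (\<lambda>n. norm (f n z))"
  proof (rule AE_I2)
    fix z :: real
    show "summable (\<lambda>n. norm (f n z))"
    proof (cases "z > x")
      case True
      then have "norm (inverse (complex_of_real z)) < 1" using x by (simp add: norm_inverse inverse_less_1_iff)
      from summable_mult2[OF summable_norm_hyp_series[OF c this, of "a + \<nu>" "b + \<mu>"], of "norm (G z)"]
      show ?thesis by (simp add: f_eq h_def norm_mult mult_ac)
    next
      case False
      then have "G z = 0" by (simp add: G_def double_integrand_eq_0)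
      then show ?thesis by (simp add: f_eq)
    qed
  qed
  from integrable_suminf[OF f_int this summable_int] sums_integral[OF f_int this summable_int]
  show "integrable lborel (\<lambda>z. \<Sum>n. f n z)"
    and "(\<lambda>n. h n * (of_real x powr (-(b + of_nat n)) * Beta (b + of_nat n) \<mu> * Beta (a + of_nat n) \<nu>))
           sums (\<integral>z. (\<Sum>n. f n z) \<partial>lborel)"
    using integral_double_integrand_inner(3)[OF x0 mu nu an]
    by (simp_all add: f_def h_def integral_mult_right_zero)
qed

definition outer_integrand ::
    "real \<Rightarrow> complex \<Rightarrow> complex \<Rightarrow> complex \<Rightarrow> complex \<Rightarrow> complex \<Rightarrow> real \<Rightarrow> complex" where
  "outer_integrand x a b c \<mu> \<nu> z =
     of_real (z - x) powr (\<nu> + \<mu> - 1) * hypF (b - a + \<mu>) \<mu> (\<nu> + \<mu>) (1 - of_real (z / x))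
     * of_real z powr (- a - \<nu>) * hypF (a + \<nu>) (b + \<mu>) c (inverse (of_real z))"

lemma continuous_on_outer_integrand:
  assumes x: "x \<ge> 1" and mu: "Re \<mu> > 0" and nu: "Re \<nu> > 0" and b: "Re b > 0"
      and c: "c \<notin> \<int>\<^sub>\<le>\<^sub>0"
  shows "continuous_on {x<..} (outer_integrand x a b c \<mu> \<nu>)"
proof -
  have "\<nu> + \<mu> \<notin> \<int>\<^sub>\<le>\<^sub>0" using mu nu by (intro Re_pos_notin_nonpos_Ints) simp
  with mu have "continuous_on hyp_dom (hypF (b - a + \<mu>) \<mu> (\<nu> + \<mu>))"
    by (intro holomorphic_on_imp_continuous_on hypF_holomorphic)
  then have 1: "continuous_on {x<..} (\<lambda>z. hypF (b - a + \<mu>) \<mu> (\<nu> + \<mu>) (1 - of_real (z / x)))"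
    by (rule continuous_on_compose2) (use x in \<open>auto intro!: continuous_intros simp: hyp_dom_eq field_simps\<close>)
  have "continuous_on hyp_dom (hypF (a + \<nu>) (b + \<mu>) c)"
    using b mu c by (intro holomorphic_on_imp_continuous_on hypF_holomorphic) simp_all
  then have 2: "continuous_on {x<..} (\<lambda>z. hypF (a + \<nu>) (b + \<mu>) c (inverse (of_real z)))"
  proof (rule continuous_on_compose2)
    show "continuous_on {x<..} (\<lambda>z. inverse (complex_of_real z))"
      using x by (intro continuous_intros) auto
    show "(\<lambda>z. inverse (complex_of_real z)) ` {x<..} \<subseteq> hyp_dom"
      using x ball_subset_hyp_dom by (auto simp: norm_inverse inverse_less_1_iff)
  qed
  show ?thesis
    unfolding outer_integrand_def[abs_def] using x
    by (intro continuous_intros 1 2) auto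
qed

text \<open>Only almost everywhere: evaluating the inner integral by part (i) needs the \<open>y\<close>-section
  to be Lebesgue integrable, which Fubini's theorem guarantees for almost every \<open>z\<close>.\<close>

lemma AE_suminf_double_integrand_series:
  assumes x: "x > 1" and mu: "Re \<mu> > 0" and nu: "Re \<nu> > 0" and a: "Re a > 0" and b: "Re b > 0"
      and c: "c \<notin> \<int>\<^sub>\<le>\<^sub>0"
  shows "AE z in lborel.
           (\<Sum>n. hyp_coeff (a + \<nu>) (b + \<mu>) c n *
                (\<integral>y. double_integrand x \<mu> \<nu> (a + of_nat n) (b + of_nat n) y z \<partial>lborel))
           = Beta \<mu> \<nu> * of_real x powr (a - b - \<mu>) * (indicator {x<..} z *\<^sub>R outer_integrand x a b c \<mu> \<nu> z)"
proof -
  have x0: "x > 0" using x by simp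
  have "integrable (lborel \<Otimes>\<^sub>M lborel) (case_prod (double_integrand x \<mu> \<nu> a b))"
    using integral_double_integrand_inner(1)[OF x0 mu nu a b] by (simp add: case_prod_unfold)
  from lborel_pair.AE_integrable_snd[OF this]
  show ?thesis
  proof (rule eventually_mono)
    fix z assume int: "integrable lborel (\<lambda>y. double_integrand x \<mu> \<nu> a b y z)"
    show "(\<Sum>n. hyp_coeff (a + \<nu>) (b + \<mu>) c n *
             (\<integral>y. double_integrand x \<mu> \<nu> (a + of_nat n) (b + of_nat n) y z \<partial>lborel))
          = Beta \<mu> \<nu> * of_real x powr (a - b - \<mu>) * (indicator {x<..} z *\<^sub>R outer_integrand x a b c \<mu> \<nu> z)"
    proof (cases "z > x")
      case False
      then show ?thesis by (simp add: double_integrand_eq_0)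
    next
      case True
      then have z: "norm (inverse (complex_of_real z)) < 1"
        using x by (simp add: norm_inverse inverse_less_1_iff)
      have "(\<Sum>n. hyp_coeff (a + \<nu>) (b + \<mu>) c n *
               (\<integral>y. double_integrand x \<mu> \<nu> (a + of_nat n) (b + of_nat n) y z \<partial>lborel))
            = hyp_series (a + \<nu>) (b + \<mu>) c (inverse (of_real z))
              * (\<integral>y. double_integrand x \<mu> \<nu> a b y z \<partial>lborel)"
        unfolding integral_double_integrand_add_of_nat[OF x0] hyp_series_eq_suminf mult.assoc[symmetric]
        by (rule suminf_mult2[symmetric]) (rule summable_norm_cancel[OF summable_norm_hyp_series[OF c z]])
      also have "hyp_series (a + \<nu>) (b + \<mu>) c (inverse (of_real z)) = hypF (a + \<nu>) (b + \<mu>) c (inverse (of_real z))"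
        using hypF_eq_hyp_series[of "b + \<mu>" c] b mu c z by simp
      finally show ?thesis
        using integral_double_integrand_y[OF x0 True mu nu int] True
        by (simp add: outer_integrand_def Beta_def add.commute[of \<nu> \<mu>] mult_ac)
    qed
  qed
qed

lemma Gamma_hyp_coeff_Beta_identity:
  assumes mu: "Re \<mu> > 0" and nu: "Re \<nu> > 0" and a: "Re a > 0" and b: "Re b > 0"
      and c: "c \<notin> \<int>\<^sub>\<le>\<^sub>0"
  shows "Gamma (a + \<nu>) * Gamma (b + \<mu>) / Gamma (\<nu> + \<mu>) *
           (hyp_coeff (a + \<nu>) (b + \<mu>) c n * (Beta (b + of_nat n) \<mu> * Beta (a + of_nat n) \<nu>))
         = Beta \<mu> \<nu> * (Gamma a * Gamma b * hyp_coeff a b c n)"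
proof -
  have Gamma_nz: "Gamma z \<noteq> 0" if "Re z > 0" for z
    using that Re_pos_notin_nonpos_Ints by (auto simp: Gamma_eq_zero_iff)
  have nn: "a + \<nu> \<notin> \<int>\<^sub>\<le>\<^sub>0" "b + \<mu> \<notin> \<int>\<^sub>\<le>\<^sub>0" "a \<notin> \<int>\<^sub>\<le>\<^sub>0" "b \<notin> \<int>\<^sub>\<le>\<^sub>0"
    using mu nu a b by (auto intro!: Re_pos_notin_nonpos_Ints)
  have "a + \<nu> + of_nat n = a + of_nat n + \<nu>" "b + \<mu> + of_nat n = b + of_nat n + \<mu>"
    by (simp_all add: ac_simps)
  moreover have "pochhammer c n \<noteq> 0" using c pochhammer_eq_0_imp_nonpos_Int by blast
  ultimately show ?thesis
    unfolding hyp_coeff_def Beta_def pochhammer_Gamma[OF nn(1)] pochhammer_Gamma[OF nn(2)]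
      pochhammer_Gamma[OF nn(3)] pochhammer_Gamma[OF nn(4)]
    using mu nu a b Gamma_nz[of "a + \<nu>"] Gamma_nz[of "b + \<mu>"] Gamma_nz[of "\<nu> + \<mu>"]
      Gamma_nz[of \<mu>] Gamma_nz[of \<nu>] Gamma_nz[of a] Gamma_nz[of b]
      Gamma_nz[of "a + of_nat n + \<nu>"] Gamma_nz[of "b + of_nat n + \<mu>"]
      Gamma_nz[of "a + of_nat n"] Gamma_nz[of "b + of_nat n"]
    by (simp add: field_simps add.commute)
qed

lemma of_real_powr_diff_of_nat:
  "x > 0 \<Longrightarrow> complex_of_real x powr (p - of_nat n) = of_real x powr p * inverse (of_real x) ^ n"
  by (simp add: powr_diff powr_nat' divide_inverse power_inverse)

lemma double_series_term_eq:
  assumes x: "x > 0" and mu: "Re \<mu> > 0" and nu: "Re \<nu> > 0" and a: "Re a > 0" and b: "Re b > 0"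
      and c: "c \<notin> \<int>\<^sub>\<le>\<^sub>0"
  shows "Gamma (a + \<nu>) * Gamma (b + \<mu>) / Gamma (\<nu> + \<mu>) * (hyp_coeff (a + \<nu>) (b + \<mu>) c n *
           (of_real x powr (-(b + of_nat n)) * Beta (b + of_nat n) \<mu> * Beta (a + of_nat n) \<nu>))
         = Beta \<mu> \<nu> * of_real x powr (a - b - \<mu>) *
           (Gamma a * Gamma b * of_real x powr (- a + \<mu>) * (hyp_coeff a b c n * inverse (of_real x) ^ n))"
proof -
  have "complex_of_real x powr (-(b + of_nat n)) = of_real x powr ((- a + \<mu>) + (a - b - \<mu>) - of_nat n)"
    by simp
  also have "\<dots> = of_real x powr (- a + \<mu>) * of_real x powr (a - b - \<mu>) * inverse (of_real x) ^ n"
    using x by (simp only: of_real_powr_diff_of_nat powr_add)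
  finally have "Gamma (a + \<nu>) * Gamma (b + \<mu>) / Gamma (\<nu> + \<mu>) * (hyp_coeff (a + \<nu>) (b + \<mu>) c n *
           (of_real x powr (-(b + of_nat n)) * Beta (b + of_nat n) \<mu> * Beta (a + of_nat n) \<nu>))
      = (Gamma (a + \<nu>) * Gamma (b + \<mu>) / Gamma (\<nu> + \<mu>) *
           (hyp_coeff (a + \<nu>) (b + \<mu>) c n * (Beta (b + of_nat n) \<mu> * Beta (a + of_nat n) \<nu>)))
        * (of_real x powr (- a + \<mu>) * of_real x powr (a - b - \<mu>) * inverse (of_real x) ^ n)"
    by (simp add: mult_ac)
  also have "\<dots> = Beta \<mu> \<nu> * (Gamma a * Gamma b * hyp_coeff a b c n)
                   * (of_real x powr (- a + \<mu>) * of_real x powr (a - b - \<mu>) * inverse (of_real x) ^ n)"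
    by (simp only: Gamma_hyp_coeff_Beta_identity[OF mu nu a b c])
  finally show ?thesis by (simp add: mult_ac)
qed

lemma has_integral_Ici_iff_Ioi:
  fixes f :: "real \<Rightarrow> 'a::banach"
  shows "(f has_integral I) {x..} \<longleftrightarrow> (f has_integral I) {x<..}"
proof -
  have "negligible {t \<in> {x..} - {x<..}. f t \<noteq> 0}" "negligible {t \<in> {x<..} - {x..}. f t \<noteq> 0}"
    by (auto intro: negligible_subset[of "{x}"])
  then show ?thesis by (rule has_integral_spike_set_eq)
qed

lemma integral_suminf_double_integrand_series:
  assumes x: "x > 1" and mu: "Re \<mu> > 0" and nu: "Re \<nu> > 0" and a: "Re a > 0" and b: "Re b > 0"
      and c: "c \<notin> \<int>\<^sub>\<le>\<^sub>0"
  defines "S \<equiv> \<lambda>z. \<Sum>n. hyp_coeff (a + \<nu>) (b + \<mu>) c n *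
                  (\<integral>y. double_integrand x \<mu> \<nu> (a + of_nat n) (b + of_nat n) y z \<partial>lborel)"
  shows "outer_integrand x a b c \<mu> \<nu> integrable_on {x..}"
    and "(\<integral>z. S z \<partial>lborel)
         = Beta \<mu> \<nu> * of_real x powr (a - b - \<mu>) * integral {x..} (outer_integrand x a b c \<mu> \<nu>)"
proof -
  define g where "g = outer_integrand x a b c \<mu> \<nu>"
  define B where "B = Beta \<mu> \<nu> * of_real x powr (a - b - \<mu>)"
  have "B \<noteq> 0" using Beta_nonzero[OF mu nu] x by (simp add: B_def)
  have S: "integrable lborel S"
    unfolding S_def by (rule sums_integral_double_integrand_series(1)[OF x mu nu a b c])
  have "continuous_on {x<..} g"
    unfolding g_def using x by (intro continuous_on_outer_integrand mu nu b c) simp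
  then have "(\<lambda>z. indicator {x<..} z *\<^sub>R g z) \<in> borel_measurable borel"
    by (rule borel_measurable_continuous_on_indicator[rotated]) simp
  then have meas: "(\<lambda>z. B * (indicator {x<..} z *\<^sub>R g z)) \<in> borel_measurable lborel"
    using borel_measurable_times[OF borel_measurable_const] by fastforce
  have "AE z in lborel. S z = B * (indicator {x<..} z *\<^sub>R g z)"
    using AE_suminf_double_integrand_series[OF x mu nu a b c] by (simp add: S_def B_def g_def)
  note AE_cong = borel_measurable_integrable[OF S] meas this
  have "integrable lborel (\<lambda>z. B * (indicator {x<..} z *\<^sub>R g z))"
    using integrable_cong_AE[OF AE_cong] S by simp
  then have "integrable lborel (\<lambda>z. inverse B * (B * (indicator {x<..} z *\<^sub>R g z)))"
    by (rule integrable_mult_right)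
  then have g: "set_integrable lborel {x<..} g"
    using \<open>B \<noteq> 0\<close> by (simp add: set_integrable_def mult.assoc[symmetric])
  have "(\<integral>z. S z \<partial>lborel) = (\<integral>z. B * (indicator {x<..} z *\<^sub>R g z) \<partial>lborel)"
    by (rule integral_cong_AE[OF AE_cong])
  also have "\<dots> = B * (LINT z:{x<..}|lborel. g z)"
    unfolding integral_mult_right_zero set_lebesgue_integral_def ..
  also have "(LINT z:{x<..}|lborel. g z) = integral {x<..} g"
    by (rule set_borel_integral_eq_integral(2)[OF g])
  finally have "(\<integral>z. S z \<partial>lborel) = B * integral {x<..} g" .
  moreover have "(g has_integral integral {x<..} g) {x..}"
    using set_borel_integral_eq_integral(1)[OF g]
    by (simp add: has_integral_Ici_iff_Ioi has_integral_integral)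
  ultimately show "g integrable_on {x..}"
    and "(\<integral>z. S z \<partial>lborel) = B * integral {x..} g"
    by (auto simp: integral_unique)
qed

theorem hypF_eq_integral_outer_integrand:
  assumes x: "x > 1" and mu: "Re \<mu> > 0" and nu: "Re \<nu> > 0" and a: "Re a > 0" and b: "Re b > 0"
      and c: "c \<notin> \<int>\<^sub>\<le>\<^sub>0"
  shows "outer_integrand x a b c \<mu> \<nu> integrable_on {x..}"
    and "Gamma a * Gamma b * of_real x powr (- a + \<mu>) * hypF a b c (inverse (of_real x))
         = Gamma (a + \<nu>) * Gamma (b + \<mu>) / Gamma (\<nu> + \<mu>) * integral {x..} (outer_integrand x a b c \<mu> \<nu>)"
proof -
  define B where "B = Beta \<mu> \<nu> * of_real x powr (a - b - \<mu>)"
  define K where "K = Gamma (a + \<nu>) * Gamma (b + \<mu>) / Gamma (\<nu> + \<mu>)"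
  define t where "t n = Gamma a * Gamma b * of_real x powr (- a + \<mu>) * (hyp_coeff a b c n * inverse (of_real x) ^ n)"
    for n
  have "B \<noteq> 0" using Beta_nonzero[OF mu nu] x by (simp add: B_def)
  show "outer_integrand x a b c \<mu> \<nu> integrable_on {x..}"
    by (rule integral_suminf_double_integrand_series(1)[OF x mu nu a b c])
  from sums_mult[OF sums_integral_double_integrand_series(2)[OF x mu nu a b c], of K]
  have "(\<lambda>n. B * t n) sums (B * (K * integral {x..} (outer_integrand x a b c \<mu> \<nu>)))"
    using double_series_term_eq[OF _ mu nu a b c, of x] integral_suminf_double_integrand_series(2)[OF x mu nu a b c] x
    by (simp add: B_def K_def t_def mult_ac)
  then have "t sums (K * integral {x..} (outer_integrand x a b c \<mu> \<nu>))"
    using sums_mult_iff[OF \<open>B \<noteq> 0\<close>] by blast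
  moreover have "norm (inverse (complex_of_real x)) < 1"
    using x by (simp add: norm_inverse inverse_less_1_iff)
  then have "t sums (Gamma a * Gamma b * of_real x powr (- a + \<mu>) * hypF a b c (inverse (of_real x)))"
    unfolding t_def using hypF_eq_hyp_series[OF b c] by (intro sums_mult) (simp add: hyp_series_sums[OF c])
  ultimately show "Gamma a * Gamma b * of_real x powr (- a + \<mu>) * hypF a b c (inverse (of_real x))
         = Gamma (a + \<nu>) * Gamma (b + \<mu>) / Gamma (\<nu> + \<mu>) * integral {x..} (outer_integrand x a b c \<mu> \<nu>)"
    by (simp add: sums_unique2 K_def)
qed

theorem lemma3:
  shows
  "(\<forall>(a::complex) (b::complex) (\<mu>::complex) (\<nu>::complex) (x::real) (z::real).
      Re \<mu> > 0 \<and> Re \<nu> > 0 \<and> 0 < x \<and> x < z \<longrightarrow>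
      (let f = (\<lambda>y::real. of_real (y - x) powr (\<mu> - 1) * of_real (z - y) powr (\<nu> - 1)
                            * of_real y powr (a - b - \<mu>))
       in f integrable_on {x..z} \<and>
          integral {x..z} f =
            Gamma \<mu> * Gamma \<nu> / Gamma (\<mu> + \<nu>) * of_real (z - x) powr (\<mu> + \<nu> - 1)
            * of_real x powr (a - b - \<mu>)
            * hypF (b - a + \<mu>) \<mu> (\<mu> + \<nu>) (1 - of_real (z / x))))
   \<and>
   (\<forall>(x::real) (a::complex) (b::complex) (c::complex) (\<mu>::complex) (\<nu>::complex).
      x > 1 \<and> Re \<mu> > 0 \<and> Re \<nu> > 0 \<and> Re a > 0 \<and> Re b > 0 \<and> c \<notin> \<int>\<^sub>\<le>\<^sub>0 \<longrightarrow>
      (let I = (\<lambda>z::real. of_real (z - x) powr (\<nu> + \<mu> - 1)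
                            * hypF (b - a + \<mu>) \<mu> (\<nu> + \<mu>) (1 - of_real (z / x)));
           g = (\<lambda>z::real. I z * of_real z powr (- a - \<nu>)
                            * hypF (a + \<nu>) (b + \<mu>) c (inverse (of_real z)))
       in g integrable_on {x..} \<and>
          Gamma a * Gamma b * of_real x powr (- a + \<mu>) * hypF a b c (inverse (of_real x)) =
            Gamma (a + \<nu>) * Gamma (b + \<mu>) / Gamma (\<nu> + \<mu>) * integral {x..} g))"
proof (intro conjI allI impI)
  fix a b \<mu> \<nu> :: complex and x z :: real
  assume "Re \<mu> > 0 \<and> Re \<nu> > 0 \<and> 0 < x \<and> x < z"
  then have "(interval_integrand x z \<mu> \<nu> a b has_integral
               Gamma \<mu> * Gamma \<nu> / Gamma (\<mu> + \<nu>) * of_real (z - x) powr (\<mu> + \<nu> - 1)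
               * of_real x powr (a - b - \<mu>) * hypF (b - a + \<mu>) \<mu> (\<mu> + \<nu>) (1 - of_real (z / x))) {x..z}"
    by (intro has_integral_interval_integrand) auto
  then show "let f = (\<lambda>y::real. of_real (y - x) powr (\<mu> - 1) * of_real (z - y) powr (\<nu> - 1)
                                 * of_real y powr (a - b - \<mu>))
             in f integrable_on {x..z} \<and>
                integral {x..z} f =
                  Gamma \<mu> * Gamma \<nu> / Gamma (\<mu> + \<nu>) * of_real (z - x) powr (\<mu> + \<nu> - 1)
                  * of_real x powr (a - b - \<mu>)
                  * hypF (b - a + \<mu>) \<mu> (\<mu> + \<nu>) (1 - of_real (z / x))"
    unfolding Let_def interval_integrand_def[symmetric] by (blast intro: integral_unique)
next
  fix x :: real and a b c \<mu> \<nu> :: complex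
  assume "x > 1 \<and> Re \<mu> > 0 \<and> Re \<nu> > 0 \<and> Re a > 0 \<and> Re b > 0 \<and> c \<notin> \<int>\<^sub>\<le>\<^sub>0"
  then show "let I = (\<lambda>z::real. of_real (z - x) powr (\<nu> + \<mu> - 1)
                                 * hypF (b - a + \<mu>) \<mu> (\<nu> + \<mu>) (1 - of_real (z / x)));
                 g = (\<lambda>z::real. I z * of_real z powr (- a - \<nu>)
                                 * hypF (a + \<nu>) (b + \<mu>) c (inverse (of_real z)))
             in g integrable_on {x..} \<and>
                Gamma a * Gamma b * of_real x powr (- a + \<mu>) * hypF a b c (inverse (of_real x)) =
                  Gamma (a + \<nu>) * Gamma (b + \<mu>) / Gamma (\<nu> + \<mu>) * integral {x..} g"
    unfolding Let_def outer_integrand_def[symmetric]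
    by (intro conjI hypF_eq_integral_outer_integrand) auto
qed

end
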